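(* Let $\mathbb{C}$ be a pointed protomodular category and let $X$ be an object of $\mathbb{C}$ with trivial center such that the generic split extension with kernel $X$ exists. A morphism $u:S\to X$ is a characteristic monomorphism if and only if the composite $c_Xu:S\to[X]$ is a Bourn-normal monomorphism.
   Context: $\mathbb{C}$ is pointed with finite limits; protomodular means the split short five lemma holds. A split extension is $X\xrightarrow{\kappa}A\underset{\beta}{\overset{\alpha}{\rightleftarrows}}B$ with $\alpha\beta=1_B$, $\kappa$ a kernel of $\alpha$. A generic split extension with kernel $X$, written $X\xrightarrow{k}[X]\ltimes X\underset{i}{\overset{p_1}{\rightleftarrows}}[X]$, is a terminal object in the category of split extensions with kernel $X$ and morphisms whose kernel component is $1_X$. The conjugation morphism $c_X:X\to[X]$ is the codomain component of the unique such morphism from $X\xrightarrow{\langle0,1\rangle}X\times X\underset{\langle1,1\rangle}{\overset{\pi_1}{\rightleftarrows}}X$ to the generic one. The center of $X$ is the terminal object among morphisms $g:B\to X$ commuting with $1_X$ (some $\varphi:B\times X\to X$ has $\varphi\langle1,0\rangle=g$, $\varphi\langle0,1\rangle=1_X$); trivial center means it is $0$. A monomorphism $m:S\to Y$ is Bourn-normal if there is an equivalence relation $(R,r_1,r_2)$ on $Y$ and $\tilde m:S\times S\to R$ with $r_1\tilde m=m\pi_1$, $r_2\tilde m=m\pi_2$ and the square $r_1\tilde m=m\pi_1$ a pullback. A morphism $u:S\to X$ is a characteristic monomorphism if for every Bourn-normal monomorphism $n:X\to Y$ the composite $nu$ is a Bourn-normal monomorphism. *)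

theory Defs
  imports Main
begin

record ('o, 'm) category =
  cobj :: "'o set"
  carr :: "'m set"
  cdom :: "'m \<Rightarrow> 'o"
  ccod :: "'m \<Rightarrow> 'o"
  cmp  :: "'m \<Rightarrow> 'm \<Rightarrow> 'm"   (* cmp C g f  =  g \<circ> f *)
  cid  :: "'o \<Rightarrow> 'm"

definition hom :: "('o,'m) category \<Rightarrow> 'o \<Rightarrow> 'o \<Rightarrow> 'm set" where
  "hom C A B = {f \<in> carr C. cdom C f = A \<and> ccod C f = B}"

definition is_category :: "('o,'m) category \<Rightarrow> bool" where
  "is_category C \<longleftrightarrow>
     (\<forall>f\<in>carr C. cdom C f \<in> cobj C \<and> ccod C f \<in> cobj C) \<and>
     (\<forall>A\<in>cobj C. cid C A \<in> hom C A A) \<and>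
     (\<forall>A B D f g. f \<in> hom C A B \<longrightarrow> g \<in> hom C B D \<longrightarrow> cmp C g f \<in> hom C A D) \<and>
     (\<forall>A B f. f \<in> hom C A B \<longrightarrow> cmp C (cid C B) f = f \<and> cmp C f (cid C A) = f) \<and>
     (\<forall>A B D E f g h. f \<in> hom C A B \<longrightarrow> g \<in> hom C B D \<longrightarrow> h \<in> hom C D E \<longrightarrow>
         cmp C h (cmp C g f) = cmp C (cmp C h g) f)"

definition is_iso :: "('o,'m) category \<Rightarrow> 'm \<Rightarrow> bool" where
  "is_iso C f \<longleftrightarrow> (\<exists>A B g. f \<in> hom C A B \<and> g \<in> hom C B A \<and>
                       cmp C g f = cid C A \<and> cmp C f g = cid C B)"

definition is_mono :: "('o,'m) category \<Rightarrow> 'm \<Rightarrow> bool" where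
  "is_mono C f \<longleftrightarrow> f \<in> carr C \<and>
     (\<forall>T a b. a \<in> hom C T (cdom C f) \<longrightarrow> b \<in> hom C T (cdom C f) \<longrightarrow>
              cmp C f a = cmp C f b \<longrightarrow> a = b)"

definition is_initial :: "('o,'m) category \<Rightarrow> 'o \<Rightarrow> bool" where
  "is_initial C Z \<longleftrightarrow> Z \<in> cobj C \<and> (\<forall>B\<in>cobj C. \<exists>!f. f \<in> hom C Z B)"

definition is_terminal :: "('o,'m) category \<Rightarrow> 'o \<Rightarrow> bool" where
  "is_terminal C Z \<longleftrightarrow> Z \<in> cobj C \<and> (\<forall>B\<in>cobj C. \<exists>!f. f \<in> hom C B Z)"

definition is_zero_obj :: "('o,'m) category \<Rightarrow> 'o \<Rightarrow> bool" where
  "is_zero_obj C Z \<longleftrightarrow> is_initial C Z \<and> is_terminal C Z"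

definition pointed :: "('o,'m) category \<Rightarrow> bool" where
  "pointed C \<longleftrightarrow> (\<exists>Z. is_zero_obj C Z)"

definition zero :: "('o,'m) category \<Rightarrow> 'o \<Rightarrow> 'o \<Rightarrow> 'm" where
  "zero C A B = (THE f. f \<in> hom C A B \<and>
      (\<exists>Z g h. is_zero_obj C Z \<and> g \<in> hom C A Z \<and> h \<in> hom C Z B \<and> f = cmp C h g))"

definition is_product :: "('o,'m) category \<Rightarrow> 'o \<Rightarrow> 'o \<Rightarrow> 'o \<Rightarrow> 'm \<Rightarrow> 'm \<Rightarrow> bool" where
  "is_product C A B P p1 p2 \<longleftrightarrow> p1 \<in> hom C P A \<and> p2 \<in> hom C P B \<and>
     (\<forall>T a b. a \<in> hom C T A \<longrightarrow> b \<in> hom C T B \<longrightarrow>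
        (\<exists>!h. h \<in> hom C T P \<and> cmp C p1 h = a \<and> cmp C p2 h = b))"

definition is_equalizer :: "('o,'m) category \<Rightarrow> 'o \<Rightarrow> 'o \<Rightarrow> 'm \<Rightarrow> 'm \<Rightarrow> 'o \<Rightarrow> 'm \<Rightarrow> bool" where
  "is_equalizer C A B f g E e \<longleftrightarrow> f \<in> hom C A B \<and> g \<in> hom C A B \<and> e \<in> hom C E A \<and>
     cmp C f e = cmp C g e \<and>
     (\<forall>T t. t \<in> hom C T A \<longrightarrow> cmp C f t = cmp C g t \<longrightarrow>
        (\<exists>!h. h \<in> hom C T E \<and> cmp C e h = t))"

definition is_pullback :: "('o,'m) category \<Rightarrow> 'o \<Rightarrow> 'o \<Rightarrow> 'o \<Rightarrow> 'm \<Rightarrow> 'm \<Rightarrow> 'o \<Rightarrow> 'm \<Rightarrow> 'm \<Rightarrow> bool" where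
  "is_pullback C A B Y f g P p q \<longleftrightarrow> f \<in> hom C A Y \<and> g \<in> hom C B Y \<and>
     p \<in> hom C P A \<and> q \<in> hom C P B \<and> cmp C f p = cmp C g q \<and>
     (\<forall>T a b. a \<in> hom C T A \<longrightarrow> b \<in> hom C T B \<longrightarrow> cmp C f a = cmp C g b \<longrightarrow>
        (\<exists>!h. h \<in> hom C T P \<and> cmp C p h = a \<and> cmp C q h = b))"

definition has_finite_limits :: "('o,'m) category \<Rightarrow> bool" where
  "has_finite_limits C \<longleftrightarrow> (\<exists>T. is_terminal C T) \<and>
     (\<forall>A\<in>cobj C. \<forall>B\<in>cobj C. \<exists>P p1 p2. is_product C A B P p1 p2) \<and>
     (\<forall>A B f g. f \<in> hom C A B \<longrightarrow> g \<in> hom C A B \<longrightarrow> (\<exists>E e. is_equalizer C A B f g E e))"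

definition is_kernel :: "('o,'m) category \<Rightarrow> 'o \<Rightarrow> 'o \<Rightarrow> 'o \<Rightarrow> 'm \<Rightarrow> 'm \<Rightarrow> bool" where
  "is_kernel C K A B k a \<longleftrightarrow> k \<in> hom C K A \<and> a \<in> hom C A B \<and> cmp C a k = zero C K B \<and>
     (\<forall>T t. t \<in> hom C T A \<longrightarrow> cmp C a t = zero C T B \<longrightarrow>
        (\<exists>!h. h \<in> hom C T K \<and> cmp C k h = t))"

definition split_ext :: "('o,'m) category \<Rightarrow> 'o \<Rightarrow> 'o \<Rightarrow> 'o \<Rightarrow> 'm \<Rightarrow> 'm \<Rightarrow> 'm \<Rightarrow> bool" where
  "split_ext C X A B \<kappa> \<alpha> \<beta> \<longleftrightarrow> \<kappa> \<in> hom C X A \<and> \<alpha> \<in> hom C A B \<and> \<beta> \<in> hom C B A \<and>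
     cmp C \<alpha> \<beta> = cid C B \<and> is_kernel C X A B \<kappa> \<alpha>"

definition protomodular :: "('o,'m) category \<Rightarrow> bool" where
  "protomodular C \<longleftrightarrow>
    (\<forall>X A B \<kappa> \<alpha> \<beta> X' A' B' \<kappa>' \<alpha>' \<beta>' k f g.
       split_ext C X A B \<kappa> \<alpha> \<beta> \<longrightarrow> split_ext C X' A' B' \<kappa>' \<alpha>' \<beta>' \<longrightarrow>
       k \<in> hom C X X' \<longrightarrow> f \<in> hom C A A' \<longrightarrow> g \<in> hom C B B' \<longrightarrow>
       cmp C f \<kappa> = cmp C \<kappa>' k \<longrightarrow> cmp C \<alpha>' f = cmp C g \<alpha> \<longrightarrow> cmp C f \<beta> = cmp C \<beta>' g \<longrightarrow>
       is_iso C k \<longrightarrow> is_iso C g \<longrightarrow> is_iso C f)"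

definition split_ext_mor :: "('o,'m) category \<Rightarrow> 'o \<Rightarrow> 'o \<Rightarrow> 'm \<Rightarrow> 'm \<Rightarrow> 'm \<Rightarrow>
    'o \<Rightarrow> 'o \<Rightarrow> 'm \<Rightarrow> 'm \<Rightarrow> 'm \<Rightarrow> 'm \<Rightarrow> 'm \<Rightarrow> bool" where
  "split_ext_mor C A B \<kappa> \<alpha> \<beta> A' B' \<kappa>' \<alpha>' \<beta>' f g \<longleftrightarrow>
     f \<in> hom C A A' \<and> g \<in> hom C B B' \<and> cmp C f \<kappa> = \<kappa>' \<and>
     cmp C \<alpha>' f = cmp C g \<alpha> \<and> cmp C f \<beta> = cmp C \<beta>' g"

text \<open>Generic split extension X --k--> G with p1 : G \<rightarrow> T, i : T \<rightarrow> G  (G = [X]\<ltimes>X, T = [X]):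
  terminal among split extensions with kernel X.\<close>
definition is_generic_split_ext :: "('o,'m) category \<Rightarrow> 'o \<Rightarrow> 'o \<Rightarrow> 'o \<Rightarrow> 'm \<Rightarrow> 'm \<Rightarrow> 'm \<Rightarrow> bool" where
  "is_generic_split_ext C X G T k p1 i \<longleftrightarrow> split_ext C X G T k p1 i \<and>
     (\<forall>A B \<kappa> \<alpha> \<beta>. split_ext C X A B \<kappa> \<alpha> \<beta> \<longrightarrow>
        (\<exists>f g. split_ext_mor C A B \<kappa> \<alpha> \<beta> G T k p1 i f g \<and>
           (\<forall>f' g'. split_ext_mor C A B \<kappa> \<alpha> \<beta> G T k p1 i f' g' \<longrightarrow> f' = f \<and> g' = g)))"

text \<open>c is the conjugation morphism c_X : X \<rightarrow> [X]: the codomain component of the morphism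
  from  X --<0,1>--> X\<times>X  (\<pi>1, <1,1>)  to the generic split extension.\<close>
definition is_conjugation :: "('o,'m) category \<Rightarrow> 'o \<Rightarrow> 'o \<Rightarrow> 'o \<Rightarrow> 'm \<Rightarrow> 'm \<Rightarrow> 'm \<Rightarrow> 'm \<Rightarrow> bool" where
  "is_conjugation C X G T k p1 i c \<longleftrightarrow>
     (\<exists>P q1 q2 d e f. is_product C X X P q1 q2 \<and>
        d \<in> hom C X P \<and> cmp C q1 d = zero C X X \<and> cmp C q2 d = cid C X \<and>
        e \<in> hom C X P \<and> cmp C q1 e = cid C X \<and> cmp C q2 e = cid C X \<and>
        split_ext_mor C P X d q1 e G T k p1 i f c)"

definition commutes_with_id :: "('o,'m) category \<Rightarrow> 'o \<Rightarrow> 'o \<Rightarrow> 'm \<Rightarrow> bool" where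
  "commutes_with_id C X B g \<longleftrightarrow> g \<in> hom C B X \<and>
     (\<exists>P p1 p2 \<phi>. is_product C B X P p1 p2 \<and> \<phi> \<in> hom C P X \<and>
        (\<forall>m. m \<in> hom C B P \<longrightarrow> cmp C p1 m = cid C B \<longrightarrow> cmp C p2 m = zero C B X \<longrightarrow>
             cmp C \<phi> m = g) \<and>
        (\<forall>m. m \<in> hom C X P \<longrightarrow> cmp C p1 m = zero C X B \<longrightarrow> cmp C p2 m = cid C X \<longrightarrow>
             cmp C \<phi> m = cid C X))"

definition is_center :: "('o,'m) category \<Rightarrow> 'o \<Rightarrow> 'o \<Rightarrow> 'm \<Rightarrow> bool" where
  "is_center C X Z z \<longleftrightarrow> commutes_with_id C X Z z \<and>
     (\<forall>B g. commutes_with_id C X B g \<longrightarrow> (\<exists>!h. h \<in> hom C B Z \<and> cmp C z h = g))"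

definition trivial_center :: "('o,'m) category \<Rightarrow> 'o \<Rightarrow> bool" where
  "trivial_center C X \<longleftrightarrow> (\<exists>Z z. is_center C X Z z \<and> is_zero_obj C Z)"

definition is_equiv_rel :: "('o,'m) category \<Rightarrow> 'o \<Rightarrow> 'o \<Rightarrow> 'm \<Rightarrow> 'm \<Rightarrow> bool" where
  "is_equiv_rel C Y R r1 r2 \<longleftrightarrow> r1 \<in> hom C R Y \<and> r2 \<in> hom C R Y \<and>
     (\<forall>T a b. a \<in> hom C T R \<longrightarrow> b \<in> hom C T R \<longrightarrow>
        cmp C r1 a = cmp C r1 b \<longrightarrow> cmp C r2 a = cmp C r2 b \<longrightarrow> a = b) \<and>
     (\<forall>T. let rel = (\<lambda>x y. \<exists>t \<in> hom C T R. cmp C r1 t = x \<and> cmp C r2 t = y) in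
        (\<forall>x \<in> hom C T Y. rel x x) \<and>
        (\<forall>x y. rel x y \<longrightarrow> rel y x) \<and>
        (\<forall>x y z. rel x y \<longrightarrow> rel y z \<longrightarrow> rel x z))"

definition bourn_normal_mono :: "('o,'m) category \<Rightarrow> 'o \<Rightarrow> 'o \<Rightarrow> 'm \<Rightarrow> bool" where
  "bourn_normal_mono C S Y m \<longleftrightarrow> m \<in> hom C S Y \<and> is_mono C m \<and>
     (\<exists>R r1 r2 P \<pi>1 \<pi>2 mt. is_equiv_rel C Y R r1 r2 \<and> is_product C S S P \<pi>1 \<pi>2 \<and>
        mt \<in> hom C P R \<and> cmp C r1 mt = cmp C m \<pi>1 \<and> cmp C r2 mt = cmp C m \<pi>2 \<and>
        is_pullback C R S Y r1 m P mt \<pi>1)"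

definition characteristic_mono :: "('o,'m) category \<Rightarrow> 'o \<Rightarrow> 'o \<Rightarrow> 'm \<Rightarrow> bool" where
  "characteristic_mono C S X u \<longleftrightarrow> u \<in> hom C S X \<and>
     (\<forall>Y n. bourn_normal_mono C X Y n \<longrightarrow> bourn_normal_mono C S Y (cmp C n u))"

end

theory Submission
  imports Defs
begin

text \<open>
  Trivial center makes \<open>c\<^sub>X\<close> monic, since any \<open>t\<close> with \<open>c\<^sub>X t = 0\<close> commutes with \<open>1\<^sub>X\<close>.
  The first projection of \<open>[X] \<ltimes> X\<close> together with the action map \<open>q : [X] \<ltimes> X \<rightarrow> [X]\<close>
  (\<open>q i = 1\<close>, \<open>q k = c\<^sub>X\<close>) is a reflexive relation on \<open>[X]\<close>, hence an equivalence relation by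
  protomodularity, and \<open>c\<^sub>X\<close> is Bourn-normal to it; so \<open>c\<^sub>X u\<close> is normal whenever \<open>u\<close> is
  characteristic. Conversely, a Bourn-normal \<open>n : X \<rightarrow> Y\<close> to \<open>R\<close> presents \<open>X\<close> as the kernel of the
  split epimorphism \<open>r\<^sub>1 : R \<rightarrow> Y\<close>, whose classifying map \<open>\<phi> : Y \<rightarrow> [X]\<close> satisfies \<open>\<phi> n = c\<^sub>X\<close>.
  If \<open>c\<^sub>X u\<close> is normal to \<open>R'\<close>, then \<open>n u\<close> is normal to the meet of \<open>R\<close> with the inverse image
  of \<open>R'\<close> along \<open>\<phi>\<close>.
\<close>

definition jointly_monic :: "('o,'m) category \<Rightarrow> 'o \<Rightarrow> 'm \<Rightarrow> 'm \<Rightarrow> bool" where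
  "jointly_monic C R r1 r2 \<longleftrightarrow>
     (\<forall>T a b. a \<in> hom C T R \<longrightarrow> b \<in> hom C T R \<longrightarrow>
        cmp C r1 a = cmp C r1 b \<longrightarrow> cmp C r2 a = cmp C r2 b \<longrightarrow> a = b)"

text \<open>\<open>(L, l, l')\<close> represents the meet of the relation \<open>(R, r1, r2)\<close> with the inverse image of
  \<open>(R', r1', r2')\<close> along \<open>ph\<close>: the pairs of \<open>R\<close> whose image under \<open>ph \<times> ph\<close> lies in \<open>R'\<close>.\<close>

definition meet_inverse_image ::
    "('o,'m) category \<Rightarrow> 'o \<Rightarrow> 'm \<Rightarrow> 'm \<Rightarrow> 'o \<Rightarrow> 'm \<Rightarrow> 'm \<Rightarrow> 'm \<Rightarrow> 'o \<Rightarrow> 'm \<Rightarrow> 'm \<Rightarrow> bool" where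
  "meet_inverse_image C R r1 r2 R' r1' r2' ph L l l' \<longleftrightarrow>
     jointly_monic C L l l' \<and> l \<in> hom C L R \<and> l' \<in> hom C L R' \<and>
     (\<forall>W x. x \<in> hom C W L \<longrightarrow>
        cmp C ph (cmp C r1 (cmp C l x)) = cmp C r1' (cmp C l' x) \<and>
        cmp C ph (cmp C r2 (cmp C l x)) = cmp C r2' (cmp C l' x)) \<and>
     (\<forall>W t t'. t \<in> hom C W R \<longrightarrow> t' \<in> hom C W R' \<longrightarrow>
        cmp C ph (cmp C r1 t) = cmp C r1' t' \<longrightarrow> cmp C ph (cmp C r2 t) = cmp C r2' t' \<longrightarrow>
        (\<exists>v. v \<in> hom C W L \<and> cmp C l v = t \<and> cmp C l' v = t'))"

lemma ex1_unique: "\<exists>!x. P x \<Longrightarrow> P a \<Longrightarrow> P b \<Longrightarrow> a = b"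
  by blast

locale pointed_protomodular =
  fixes C :: "('o,'m) category"
  assumes category: "is_category C" and pointed: "pointed C"
    and finite_limits: "has_finite_limits C" and protomodular: "protomodular C"
begin

abbreviation arr where "arr f \<equiv> f \<in> carr C"
abbreviation dm where "dm f \<equiv> cdom C f"
abbreviation cd where "cd f \<equiv> ccod C f"
abbreviation comp (infixr "\<cdot>" 55) where "g \<cdot> f \<equiv> cmp C g f"
abbreviation idm where "idm A \<equiv> cid C A"
abbreviation Ob where "Ob \<equiv> cobj C"
abbreviation Hom where "Hom A B \<equiv> hom C A B"
abbreviation Z0 where "Z0 A B \<equiv> zero C A B"

lemma in_Hom_iff [simp]: "f \<in> Hom A B \<longleftrightarrow> arr f \<and> dm f = A \<and> cd f = B"
  by (simp add: hom_def)

lemma dm_in_Ob [simp]: "arr f \<Longrightarrow> dm f \<in> Ob" and cd_in_Ob [simp]: "arr f \<Longrightarrow> cd f \<in> Ob"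
  using category unfolding is_category_def by auto

lemma arr_comp [simp]: "arr f \<Longrightarrow> arr g \<Longrightarrow> dm g = cd f \<Longrightarrow> arr (g \<cdot> f)"
  and dm_comp [simp]: "arr f \<Longrightarrow> arr g \<Longrightarrow> dm g = cd f \<Longrightarrow> dm (g \<cdot> f) = dm f"
  and cd_comp [simp]: "arr f \<Longrightarrow> arr g \<Longrightarrow> dm g = cd f \<Longrightarrow> cd (g \<cdot> f) = cd g"
proof -
  assume "arr f" "arr g" "dm g = cd f"
  then have "f \<in> Hom (dm f) (cd f)" "g \<in> Hom (cd f) (cd g)" by auto
  then have "g \<cdot> f \<in> Hom (dm f) (cd g)" using category unfolding is_category_def by blast
  then show "arr (g \<cdot> f)" "dm (g \<cdot> f) = dm f" "cd (g \<cdot> f) = cd g" by auto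
qed

lemma comp_assoc [simp]:
  "arr f \<Longrightarrow> arr g \<Longrightarrow> arr h \<Longrightarrow> dm g = cd f \<Longrightarrow> dm h = cd g \<Longrightarrow> (h \<cdot> g) \<cdot> f = h \<cdot> (g \<cdot> f)"
proof -
  assume "arr f" "arr g" "arr h" "dm g = cd f" "dm h = cd g"
  then have "f \<in> Hom (dm f) (cd f)" "g \<in> Hom (cd f) (cd g)" "h \<in> Hom (cd g) (cd h)" by auto
  then show ?thesis using category unfolding is_category_def by metis
qed

lemma arr_id [simp]: "A \<in> Ob \<Longrightarrow> arr (idm A)"
  and dm_id [simp]: "A \<in> Ob \<Longrightarrow> dm (idm A) = A"
  and cd_id [simp]: "A \<in> Ob \<Longrightarrow> cd (idm A) = A"
  using category unfolding is_category_def by auto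

lemma comp_id_left [simp]: "arr f \<Longrightarrow> cd f = B \<Longrightarrow> idm B \<cdot> f = f"
  and comp_id_right [simp]: "arr f \<Longrightarrow> dm f = A \<Longrightarrow> f \<cdot> idm A = f"
  using category unfolding is_category_def by (metis in_Hom_iff)+

text \<open>Composition is normalised to the right by the simplifier, so an equation \<open>x \<cdot> y = z\<close>
  only fires after whiskering it with the remaining factor.\<close>

lemma comp_eq_whisker:
  "x \<cdot> y = z \<Longrightarrow> arr x \<Longrightarrow> arr y \<Longrightarrow> dm x = cd y \<Longrightarrow> arr w \<Longrightarrow> cd w = dm y \<Longrightarrow>
   x \<cdot> (y \<cdot> w) = z \<cdot> w"
  by (simp flip: comp_assoc)

lemma comp_eq_comp_whisker:
  "x \<cdot> y = x' \<cdot> y' \<Longrightarrow> arr x \<Longrightarrow> arr y \<Longrightarrow> dm x = cd y \<Longrightarrow> arr x' \<Longrightarrow> arr y' \<Longrightarrow> dm x' = cd y' \<Longrightarrow>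
   arr w \<Longrightarrow> cd w = dm y \<Longrightarrow> cd w = dm y' \<Longrightarrow> x \<cdot> (y \<cdot> w) = x' \<cdot> (y' \<cdot> w)"
  by (simp flip: comp_assoc)

lemma is_monoI:
  assumes "m \<in> Hom M A"
    and "\<And>T a b. a \<in> Hom T M \<Longrightarrow> b \<in> Hom T M \<Longrightarrow> m \<cdot> a = m \<cdot> b \<Longrightarrow> a = b"
  shows "is_mono C m"
  using assms unfolding is_mono_def by auto

lemma is_monoD:
  assumes "is_mono C m" "m \<in> Hom M A" "a \<in> Hom T M" "b \<in> Hom T M" "m \<cdot> a = m \<cdot> b"
  shows "a = b"
  using assms unfolding is_mono_def by auto

lemma split_mono:
  assumes m: "m \<in> Hom M A" and r: "r \<in> Hom A M" "r \<cdot> m = idm M"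
  shows "is_mono C m"
proof (rule is_monoI[OF m])
  fix T a b assume ab: "a \<in> Hom T M" "b \<in> Hom T M" "m \<cdot> a = m \<cdot> b"
  have "a = r \<cdot> (m \<cdot> a)" using comp_eq_whisker[OF r(2), of a] ab m r by simp
  also have "\<dots> = r \<cdot> (m \<cdot> b)" using ab(3) by simp
  also have "\<dots> = b" using comp_eq_whisker[OF r(2), of b] ab m r by simp
  finally show "a = b" .
qed

lemma mono_comp:
  assumes "is_mono C m" "is_mono C n" "m \<in> Hom A B" "n \<in> Hom B D"
  shows "is_mono C (n \<cdot> m)"
proof (rule is_monoI)
  show "n \<cdot> m \<in> Hom A D" using assms by simp
  fix T a b assume ab: "a \<in> Hom T A" "b \<in> Hom T A" "(n \<cdot> m) \<cdot> a = (n \<cdot> m) \<cdot> b"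
  then have "m \<cdot> a = m \<cdot> b" using is_monoD[OF assms(2,4), of "m \<cdot> a" T "m \<cdot> b"] assms by simp
  then show "a = b" using is_monoD[OF assms(1,3) ab(1,2)] by simp
qed

lemma mono_cancel:
  assumes "is_mono C (n \<cdot> m)" "m \<in> Hom A B" "n \<in> Hom B D"
  shows "is_mono C m"
proof (rule is_monoI[OF assms(2)])
  fix T a b assume ab: "a \<in> Hom T A" "b \<in> Hom T A" "m \<cdot> a = m \<cdot> b"
  then have "(n \<cdot> m) \<cdot> a = (n \<cdot> m) \<cdot> b" using assms by simp
  then show "a = b" using is_monoD[OF assms(1) _ ab(1,2)] assms by simp
qed

lemma iso_id: "A \<in> Ob \<Longrightarrow> is_iso C (idm A)"
  unfolding is_iso_def by (rule exI[of _ A], rule exI[of _ A], rule exI[of _ "idm A"]) auto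

subsection \<open>Zero morphisms\<close>

lemma zero_object_exists: obtains Z where "is_zero_obj C Z"
  using pointed unfolding pointed_def by blast

lemma zero_obj_in_Ob: "is_zero_obj C Z \<Longrightarrow> Z \<in> Ob"
  by (simp add: is_zero_obj_def is_initial_def)

lemma ex_to_zero_obj: "is_zero_obj C Z \<Longrightarrow> A \<in> Ob \<Longrightarrow> \<exists>g. g \<in> Hom A Z"
  unfolding is_zero_obj_def is_terminal_def by blast

lemma ex_from_zero_obj: "is_zero_obj C Z \<Longrightarrow> A \<in> Ob \<Longrightarrow> \<exists>g. g \<in> Hom Z A"
  unfolding is_zero_obj_def is_initial_def by blast

lemma to_zero_obj_unique: "is_zero_obj C Z \<Longrightarrow> g \<in> Hom A Z \<Longrightarrow> g' \<in> Hom A Z \<Longrightarrow> g = g'"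
  unfolding is_zero_obj_def is_terminal_def by (metis in_Hom_iff dm_in_Ob)

lemma from_zero_obj_unique: "is_zero_obj C Z \<Longrightarrow> g \<in> Hom Z A \<Longrightarrow> g' \<in> Hom Z A \<Longrightarrow> g = g'"
  unfolding is_zero_obj_def is_initial_def by (metis in_Hom_iff cd_in_Ob)

lemma zero_factors_through_zero_obj:
  assumes Z: "is_zero_obj C Z" and g: "g \<in> Hom A Z" and h: "h \<in> Hom Z B"
  shows "h \<cdot> g = Z0 A B"
  unfolding zero_def
proof (rule the_equality[symmetric])
  show "h \<cdot> g \<in> Hom A B \<and>
    (\<exists>Z g' h'. is_zero_obj C Z \<and> g' \<in> Hom A Z \<and> h' \<in> Hom Z B \<and> h \<cdot> g = h' \<cdot> g')"
    using Z g h by auto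
next
  fix f assume "f \<in> Hom A B \<and> (\<exists>Z g h. is_zero_obj C Z \<and> g \<in> Hom A Z \<and> h \<in> Hom Z B \<and> f = h \<cdot> g)"
  then obtain Z' g' h' where Z': "is_zero_obj C Z'" "g' \<in> Hom A Z'" "h' \<in> Hom Z' B" "f = h' \<cdot> g'"
    by blast
  obtain v where v: "v \<in> Hom Z Z'" using ex_from_zero_obj[OF Z zero_obj_in_Ob[OF Z'(1)]] by blast
  have "g' = v \<cdot> g" using to_zero_obj_unique[OF Z'(1) Z'(2), of "v \<cdot> g"] v g by auto
  moreover have "h = h' \<cdot> v" using from_zero_obj_unique[OF Z h, of "h' \<cdot> v"] v Z' by auto
  ultimately show "f = h \<cdot> g" using Z' v g by auto
qed

lemma arr_zero [simp]: "A \<in> Ob \<Longrightarrow> B \<in> Ob \<Longrightarrow> arr (Z0 A B)"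
  and dm_zero [simp]: "A \<in> Ob \<Longrightarrow> B \<in> Ob \<Longrightarrow> dm (Z0 A B) = A"
  and cd_zero [simp]: "A \<in> Ob \<Longrightarrow> B \<in> Ob \<Longrightarrow> cd (Z0 A B) = B"
proof -
  assume "A \<in> Ob" "B \<in> Ob"
  moreover obtain Z where Z: "is_zero_obj C Z" by (rule zero_object_exists)
  ultimately obtain g h where "g \<in> Hom A Z" "h \<in> Hom Z B"
    using ex_to_zero_obj ex_from_zero_obj by blast
  then have "Z0 A B \<in> Hom A B"
    by (metis zero_factors_through_zero_obj[OF Z] arr_comp cd_comp dm_comp in_Hom_iff)
  then show "arr (Z0 A B)" "dm (Z0 A B) = A" "cd (Z0 A B) = B" by auto
qed

lemma comp_zero [simp]: "arr f \<Longrightarrow> dm f = B \<Longrightarrow> A \<in> Ob \<Longrightarrow> f \<cdot> Z0 A B = Z0 A (cd f)"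
proof -
  assume f: "arr f" "dm f = B" and A: "A \<in> Ob"
  obtain Z where Z: "is_zero_obj C Z" by (rule zero_object_exists)
  obtain g h where gh: "g \<in> Hom A Z" "h \<in> Hom Z B"
    using ex_to_zero_obj[OF Z A] ex_from_zero_obj[OF Z, of B] f by auto
  then show ?thesis
    using zero_factors_through_zero_obj[OF Z gh]
      zero_factors_through_zero_obj[OF Z gh(1), of "f \<cdot> h"] f
    by auto
qed

lemma zero_comp [simp]: "arr f \<Longrightarrow> cd f = B \<Longrightarrow> D \<in> Ob \<Longrightarrow> Z0 B D \<cdot> f = Z0 (dm f) D"
proof -
  assume f: "arr f" "cd f = B" and D: "D \<in> Ob"
  obtain Z where Z: "is_zero_obj C Z" by (rule zero_object_exists)
  obtain g h where gh: "g \<in> Hom B Z" "h \<in> Hom Z D"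
    using ex_to_zero_obj[OF Z, of B] ex_from_zero_obj[OF Z D] f by auto
  have "Z0 B D \<cdot> f = (h \<cdot> g) \<cdot> f" by (simp only: zero_factors_through_zero_obj[OF Z gh])
  also have "\<dots> = h \<cdot> (g \<cdot> f)" using gh f by simp
  also have "\<dots> = Z0 (dm f) D" using zero_factors_through_zero_obj[OF Z _ gh(2)] gh f by auto
  finally show ?thesis .
qed

subsection \<open>Finite limits\<close>

lemma product_exists: "A \<in> Ob \<Longrightarrow> B \<in> Ob \<Longrightarrow> \<exists>P p1 p2. is_product C A B P p1 p2"
  using finite_limits unfolding has_finite_limits_def by blast

lemma equalizer_exists: "f \<in> Hom A B \<Longrightarrow> g \<in> Hom A B \<Longrightarrow> \<exists>E e. is_equalizer C A B f g E e"
  using finite_limits unfolding has_finite_limits_def by blast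

lemma productD:
  assumes "is_product C A B P p1 p2"
  shows "p1 \<in> Hom P A" "p2 \<in> Hom P B" "P \<in> Ob" "A \<in> Ob" "B \<in> Ob"
  using assms unfolding is_product_def by auto

lemma product_lift:
  "is_product C A B P p1 p2 \<Longrightarrow> a \<in> Hom T A \<Longrightarrow> b \<in> Hom T B \<Longrightarrow>
   \<exists>h. h \<in> Hom T P \<and> p1 \<cdot> h = a \<and> p2 \<cdot> h = b"
  unfolding is_product_def by blast

lemma product_arr_eqI:
  assumes P: "is_product C A B P p1 p2" and h: "h \<in> Hom T P" "h' \<in> Hom T P"
    and eq: "p1 \<cdot> h = p1 \<cdot> h'" "p2 \<cdot> h = p2 \<cdot> h'"
  shows "h = h'"
proof -
  have "p1 \<cdot> h \<in> Hom T A" "p2 \<cdot> h \<in> Hom T B" using h productD[OF P] by auto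
  then have "\<exists>!x. x \<in> Hom T P \<and> p1 \<cdot> x = p1 \<cdot> h \<and> p2 \<cdot> x = p2 \<cdot> h"
    using P unfolding is_product_def by blast
  then show ?thesis by (rule ex1_unique) (use h eq in auto)
qed

lemma equalizerD:
  assumes "is_equalizer C A B f g E e"
  shows "e \<in> Hom E A" "f \<cdot> e = g \<cdot> e" "f \<in> Hom A B" "g \<in> Hom A B"
  using assms unfolding is_equalizer_def by auto

lemma equalizer_lift:
  "is_equalizer C A B f g E e \<Longrightarrow> t \<in> Hom T A \<Longrightarrow> f \<cdot> t = g \<cdot> t \<Longrightarrow> \<exists>h. h \<in> Hom T E \<and> e \<cdot> h = t"
  unfolding is_equalizer_def by blast

lemma equalizer_mono:
  assumes E: "is_equalizer C A B f g E e"
  shows "is_mono C e"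
  unfolding is_mono_def
proof (intro conjI allI impI)
  note e = equalizerD[OF E]
  show "arr e" using e by simp
  fix T h h' assume h: "h \<in> Hom T (dm e)" "h' \<in> Hom T (dm e)" and eq: "e \<cdot> h = e \<cdot> h'"
  have "e \<cdot> h \<in> Hom T A" "f \<cdot> (e \<cdot> h) = g \<cdot> (e \<cdot> h)"
    using comp_eq_comp_whisker[OF e(2)] h e by auto
  then have "\<exists>!x. x \<in> Hom T E \<and> e \<cdot> x = e \<cdot> h" using E unfolding is_equalizer_def by blast
  then show "h = h'" using h eq e by auto
qed

lemma pullbackD:
  assumes "is_pullback C A B Y f g P p q"
  shows "f \<in> Hom A Y" "g \<in> Hom B Y" "p \<in> Hom P A" "q \<in> Hom P B" "f \<cdot> p = g \<cdot> q"
  using assms unfolding is_pullback_def by (simp_all del: in_Hom_iff)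

lemma pullback_lift:
  "is_pullback C A B Y f g P p q \<Longrightarrow> a \<in> Hom T A \<Longrightarrow> b \<in> Hom T B \<Longrightarrow> f \<cdot> a = g \<cdot> b \<Longrightarrow>
   \<exists>h. h \<in> Hom T P \<and> p \<cdot> h = a \<and> q \<cdot> h = b"
  unfolding is_pullback_def by blast

lemma pullback_arr_eqI:
  assumes P: "is_pullback C A B Y f g P p q" and h: "h \<in> Hom T P" "h' \<in> Hom T P"
    and eq: "p \<cdot> h = p \<cdot> h'" "q \<cdot> h = q \<cdot> h'"
  shows "h = h'"
proof -
  note P' = pullbackD[OF P]
  have "p \<cdot> h \<in> Hom T A" "q \<cdot> h \<in> Hom T B" using h P' by auto
  moreover have "f \<cdot> (p \<cdot> h) = g \<cdot> (q \<cdot> h)"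
    by (rule comp_eq_comp_whisker[OF P'(5)]) (use h P' in auto)
  ultimately have "\<exists>!x. x \<in> Hom T P \<and> p \<cdot> x = p \<cdot> h \<and> q \<cdot> x = q \<cdot> h"
    using P unfolding is_pullback_def by blast
  then show ?thesis by (rule ex1_unique) (use h eq in auto)
qed

lemma pullback_exists:
  assumes f: "f \<in> Hom A Y" and g: "g \<in> Hom B Y"
  shows "\<exists>P p q. is_pullback C A B Y f g P p q"
proof -
  have "A \<in> Ob" "B \<in> Ob" using f g by auto
  then obtain Q r1 r2 where Q: "is_product C A B Q r1 r2" using product_exists by blast
  note r = productD[OF Q]
  obtain E e where E: "is_equalizer C Q Y (f \<cdot> r1) (g \<cdot> r2) E e"
    using equalizer_exists[of "f \<cdot> r1" Q Y "g \<cdot> r2"] f g r by auto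
  note e = equalizerD[OF E]
  have "is_pullback C A B Y f g E (r1 \<cdot> e) (r2 \<cdot> e)"
    unfolding is_pullback_def
  proof (intro conjI allI impI)
    show "f \<in> Hom A Y" "g \<in> Hom B Y" by fact+
    show "r1 \<cdot> e \<in> Hom E A" "r2 \<cdot> e \<in> Hom E B" using r e by auto
    show "f \<cdot> r1 \<cdot> e = g \<cdot> r2 \<cdot> e" using e(2) r(1,2) e(1) f g by simp
    fix T a b assume a: "a \<in> Hom T A" and b: "b \<in> Hom T B" and ab: "f \<cdot> a = g \<cdot> b"
    obtain h where h: "h \<in> Hom T Q" "r1 \<cdot> h = a" "r2 \<cdot> h = b" using product_lift[OF Q a b] by blast
    have "(f \<cdot> r1) \<cdot> h = (g \<cdot> r2) \<cdot> h" using h r(1,2) f g ab by simp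
    then obtain h' where h': "h' \<in> Hom T E" "e \<cdot> h' = h" using equalizer_lift[OF E h(1)] by blast
    show "\<exists>!h. h \<in> Hom T E \<and> (r1 \<cdot> e) \<cdot> h = a \<and> (r2 \<cdot> e) \<cdot> h = b"
    proof (rule ex1I[of _ h'])
      show "h' \<in> Hom T E \<and> (r1 \<cdot> e) \<cdot> h' = a \<and> (r2 \<cdot> e) \<cdot> h' = b"
        using h' h r(1,2) e(1) by simp
      fix h'' assume "h'' \<in> Hom T E \<and> (r1 \<cdot> e) \<cdot> h'' = a \<and> (r2 \<cdot> e) \<cdot> h'' = b"
      then have h'': "h'' \<in> Hom T E" "r1 \<cdot> (e \<cdot> h'') = a" "r2 \<cdot> (e \<cdot> h'') = b"
        using r(1,2) e(1) by auto
      have "e \<cdot> h'' = h"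
        by (rule product_arr_eqI[OF Q]) (use h'' h e(1) in simp_all)
      then show "h'' = h'" using is_monoD[OF equalizer_mono[OF E] e(1)] h' h'' by simp
    qed
  qed
  then show ?thesis by blast
qed

lemma kernelD:
  assumes "is_kernel C K A B k f"
  shows "k \<in> Hom K A" "f \<in> Hom A B" "f \<cdot> k = Z0 K B"
  using assms unfolding is_kernel_def by auto

lemma kernel_lift:
  "is_kernel C K A B k f \<Longrightarrow> t \<in> Hom T A \<Longrightarrow> f \<cdot> t = Z0 T B \<Longrightarrow> \<exists>h. h \<in> Hom T K \<and> k \<cdot> h = t"
  unfolding is_kernel_def by blast

lemma kernel_arr_eqI:
  assumes K: "is_kernel C K A B k f" and h: "h \<in> Hom T K" "h' \<in> Hom T K" and eq: "k \<cdot> h = k \<cdot> h'"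
  shows "h = h'"
proof -
  note K' = kernelD[OF K]
  have "k \<cdot> h \<in> Hom T A" using h K' by auto
  moreover have "f \<cdot> (k \<cdot> h) = Z0 T B" using comp_eq_whisker[OF K'(3), of h] h K' by auto
  ultimately have "\<exists>!x. x \<in> Hom T K \<and> k \<cdot> x = k \<cdot> h" using K unfolding is_kernel_def by blast
  then show ?thesis by (rule ex1_unique) (use h eq in auto)
qed

lemma kernel_exists:
  assumes f: "f \<in> Hom A B"
  shows "\<exists>K k. is_kernel C K A B k f"
proof -
  obtain E e where E: "is_equalizer C A B f (Z0 A B) E e"
    using equalizer_exists[of f A B "Z0 A B"] f by auto
  note e = equalizerD[OF E]
  have "is_kernel C E A B e f" unfolding is_kernel_def
  proof (intro conjI allI impI)
    show "e \<in> Hom E A" "f \<in> Hom A B" "f \<cdot> e = Z0 E B" using e f by auto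
    fix T t assume t: "t \<in> Hom T A" "f \<cdot> t = Z0 T B"
    then have "f \<cdot> t = Z0 A B \<cdot> t" using f by auto
    then obtain h where "h \<in> Hom T E" "e \<cdot> h = t" using equalizer_lift[OF E t(1)] by blast
    then show "\<exists>!h. h \<in> Hom T E \<and> e \<cdot> h = t"
      using is_monoD[OF equalizer_mono[OF E] e(1)] by blast
  qed
  then show ?thesis by blast
qed

subsection \<open>Split extensions\<close>

lemma split_extD:
  assumes "split_ext C X A B k a b"
  shows "k \<in> Hom X A" "a \<in> Hom A B" "b \<in> Hom B A" "a \<cdot> b = idm B" "is_kernel C X A B k a"
  using assms unfolding split_ext_def by auto

lemma split_short_five:
  assumes E: "split_ext C X A B k a b" and E': "split_ext C X A' B k' a' b'"
    and f: "f \<in> Hom A A'" and fk: "f \<cdot> k = k'" and af: "a' \<cdot> f = a" and fb: "f \<cdot> b = b'"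
  shows "\<exists>g. g \<in> Hom A' A \<and> g \<cdot> f = idm A \<and> f \<cdot> g = idm A'"
proof -
  note e = split_extD[OF E] and e' = split_extD[OF E']
  have X: "X \<in> Ob" and B: "B \<in> Ob" using e by auto
  have "is_iso C f"
  proof (rule protomodular[unfolded protomodular_def, rule_format, OF E E'])
    show "idm X \<in> Hom X X" "f \<in> Hom A A'" "idm B \<in> Hom B B" "is_iso C (idm X)" "is_iso C (idm B)"
      using X B f iso_id by auto
    show "f \<cdot> k = k' \<cdot> idm X" "a' \<cdot> f = idm B \<cdot> a" "f \<cdot> b = b' \<cdot> idm B"
      using fk af fb e e' by auto
  qed
  then show ?thesis using f unfolding is_iso_def by auto
qed

lemma product_split_ext:
  assumes P: "is_product C B X P p1 p2"
    and d: "d \<in> Hom X P" "p1 \<cdot> d = Z0 X B" "p2 \<cdot> d = idm X"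
    and s: "s \<in> Hom B P" "p1 \<cdot> s = idm B"
  shows "split_ext C X P B d p1 s"
  unfolding split_ext_def is_kernel_def
proof (intro conjI allI impI)
  note p = productD[OF P]
  show "d \<in> Hom X P" "p1 \<in> Hom P B" "s \<in> Hom B P" "p1 \<cdot> s = idm B" "p1 \<cdot> d = Z0 X B"
    using d s p by auto
  fix T t assume t: "t \<in> Hom T P" "p1 \<cdot> t = Z0 T B"
  have dt: "d \<cdot> (p2 \<cdot> t) = t"
  proof (rule product_arr_eqI[OF P])
    show "p1 \<cdot> (d \<cdot> (p2 \<cdot> t)) = p1 \<cdot> t"
      using comp_eq_whisker[OF d(2), of "p2 \<cdot> t"] t d p by simp
    show "p2 \<cdot> (d \<cdot> (p2 \<cdot> t)) = p2 \<cdot> t"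
      using comp_eq_whisker[OF d(3), of "p2 \<cdot> t"] t d p by simp
  qed (use t d p in auto)
  show "\<exists>!h. h \<in> Hom T X \<and> d \<cdot> h = t"
  proof (rule ex1I[of _ "p2 \<cdot> t"])
    show "p2 \<cdot> t \<in> Hom T X \<and> d \<cdot> (p2 \<cdot> t) = t" using dt t p by auto
    fix h assume h: "h \<in> Hom T X \<and> d \<cdot> h = t"
    then show "h = p2 \<cdot> t" using comp_eq_whisker[OF d(3), of h] d p by auto
  qed
qed (use d productD[OF P] in auto)

lemma mono_covering_split_ext_iso:
  assumes E: "split_ext C X A B k a b" and m: "m \<in> Hom M A" "is_mono C m"
    and k': "k' \<in> Hom X M" "m \<cdot> k' = k" and b': "b' \<in> Hom B M" "m \<cdot> b' = b"
  shows "\<exists>g. g \<in> Hom A M \<and> m \<cdot> g = idm A \<and> g \<cdot> m = idm M"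
proof -
  note e = split_extD[OF E]
  note K = kernelD[OF e(5)]
  have "split_ext C X M B k' (a \<cdot> m) b'"
    unfolding split_ext_def is_kernel_def
  proof (intro conjI allI impI)
    show "k' \<in> Hom X M" "a \<cdot> m \<in> Hom M B" "b' \<in> Hom B M" using k' m e b' by auto
    show "(a \<cdot> m) \<cdot> b' = idm B" using b' m e by simp
    show "(a \<cdot> m) \<cdot> k' = Z0 X B" using k' m e K by simp
    fix T t assume t: "t \<in> Hom T M" "(a \<cdot> m) \<cdot> t = Z0 T B"
    obtain h where h: "h \<in> Hom T X" "k \<cdot> h = m \<cdot> t"
      using kernel_lift[OF e(5), of "m \<cdot> t" T] t m e by auto
    have "m \<cdot> (k' \<cdot> h) = k \<cdot> h" using comp_eq_whisker[OF k'(2), of h] h k' m by simp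
    then have "k' \<cdot> h = t" using is_monoD[OF m(2,1), of "k' \<cdot> h" T t] h t k' by simp
    show "\<exists>!h. h \<in> Hom T X \<and> k' \<cdot> h = t"
    proof (rule ex1I[of _ h])
      show "h \<in> Hom T X \<and> k' \<cdot> h = t" using h \<open>k' \<cdot> h = t\<close> by simp
      fix h' assume h': "h' \<in> Hom T X \<and> k' \<cdot> h' = t"
      have "m \<cdot> (k' \<cdot> h') = k \<cdot> h'" using comp_eq_whisker[OF k'(2), of h'] h' k' m by simp
      then show "h' = h" using kernel_arr_eqI[OF e(5), of h' T h] h h' by simp
    qed
  qed (use k' m e in auto)
  then show ?thesis using split_short_five[OF _ E m(1) k'(2) _ b'(2)] m e by auto
qed

lemma split_ext_jointly_epic:
  assumes E: "split_ext C X A B k a b" and xy: "x \<in> Hom A D" "y \<in> Hom A D"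
    and xk: "x \<cdot> k = y \<cdot> k" and xb: "x \<cdot> b = y \<cdot> b"
  shows "x = y"
proof -
  note e = split_extD[OF E]
  obtain Q q where Q: "is_equalizer C A D x y Q q" using equalizer_exists[OF xy] by blast
  note q = equalizerD[OF Q]
  obtain k' where k': "k' \<in> Hom X Q" "q \<cdot> k' = k" using equalizer_lift[OF Q, of k X] e xk by auto
  obtain b' where b': "b' \<in> Hom B Q" "q \<cdot> b' = b" using equalizer_lift[OF Q, of b B] e xb by auto
  obtain g where g: "g \<in> Hom A Q" "q \<cdot> g = idm A"
    using mono_covering_split_ext_iso[OF E q(1) equalizer_mono[OF Q] k' b'] by auto
  have "x = x \<cdot> (q \<cdot> g)" using g xy by simp
  also have "\<dots> = y \<cdot> (q \<cdot> g)" using comp_eq_comp_whisker[OF q(2), of g] g xy q by simp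
  also have "\<dots> = y" using g xy by simp
  finally show ?thesis .
qed

text \<open>The section is a monomorphism through which both the kernel and the section factor.\<close>

lemma split_ext_zero_kernel:
  assumes E: "split_ext C Z A B k a b" and Z: "is_zero_obj C Z"
  shows "b \<cdot> a = idm A"
proof -
  note e = split_extD[OF E]
  have ZB: "Z0 Z B \<in> Hom Z B" and B: "B \<in> Ob" using Z e by (auto simp: zero_obj_in_Ob)
  have "b \<cdot> Z0 Z B = k" using from_zero_obj_unique[OF Z, of "b \<cdot> Z0 Z B" A k] ZB e by auto
  moreover have "is_mono C b" using split_mono[OF e(3,2,4)] .
  moreover have "idm B \<in> Hom B B" "b \<cdot> idm B = b" using B e by auto
  ultimately obtain g where g: "g \<in> Hom A B" "b \<cdot> g = idm A"
    using mono_covering_split_ext_iso[OF E e(3) _ ZB] by blast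
  have "a = a \<cdot> (b \<cdot> g)" using g e by simp
  also have "\<dots> = g" using comp_eq_whisker[OF e(4), of g] g e by simp
  finally show ?thesis using g by simp
qed

text \<open>The diagonal of the kernel pair of \<open>f\<close> splits the first projection, whose kernel is zero.\<close>

lemma mono_if_trivial_kernel:
  assumes f: "f \<in> Hom A B"
    and trivial: "\<And>W t. t \<in> Hom W A \<Longrightarrow> f \<cdot> t = Z0 W B \<Longrightarrow> t = Z0 W A"
  shows "is_mono C f"
proof -
  obtain Q q1 q2 where Q: "is_pullback C A A B f f Q q1 q2" using pullback_exists[OF f f] by blast
  note q = pullbackD[OF Q]
  obtain dl where dl: "dl \<in> Hom A Q" "q1 \<cdot> dl = idm A" "q2 \<cdot> dl = idm A"
    using pullback_lift[OF Q, of "idm A" A "idm A"] f by auto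
  obtain Z where Z: "is_zero_obj C Z" by (rule zero_object_exists)
  have ZO: "Z \<in> Ob" using zero_obj_in_Ob[OF Z] .
  have "split_ext C Z Q A (Z0 Z Q) q1 dl"
    unfolding split_ext_def is_kernel_def
  proof (intro conjI allI impI)
    show "Z0 Z Q \<in> Hom Z Q" "q1 \<in> Hom Q A" "dl \<in> Hom A Q" "q1 \<cdot> dl = idm A" "q1 \<cdot> Z0 Z Q = Z0 Z A"
      using ZO q dl by auto
    fix T t assume t: "t \<in> Hom T Q" "q1 \<cdot> t = Z0 T A"
    have "f \<cdot> (q2 \<cdot> t) = f \<cdot> (q1 \<cdot> t)" using comp_eq_comp_whisker[OF q(5), of t] t q by simp
    also have "\<dots> = Z0 T B" using t f by auto
    finally have "q2 \<cdot> t = Z0 T A" using trivial[of "q2 \<cdot> t" T] t q by auto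
    then have "t = Z0 T Q" using pullback_arr_eqI[OF Q t(1), of "Z0 T Q"] t q by auto
    moreover obtain h where "h \<in> Hom T Z" using ex_to_zero_obj[OF Z, of T] t by auto
    ultimately show "\<exists>!h. h \<in> Hom T Z \<and> Z0 Z Q \<cdot> h = t"
      using to_zero_obj_unique[OF Z] ZO q by auto
  qed (use ZO q in auto)
  from split_ext_zero_kernel[OF this Z] have dlq: "dl \<cdot> q1 = idm Q" .
  show ?thesis
  proof (rule is_monoI[OF f])
    fix T x y assume xy: "x \<in> Hom T A" "y \<in> Hom T A" "f \<cdot> x = f \<cdot> y"
    obtain w where w: "w \<in> Hom T Q" "q1 \<cdot> w = x" "q2 \<cdot> w = y" using pullback_lift[OF Q xy] by blast
    have "w = dl \<cdot> x" using comp_eq_whisker[OF dlq, of w] w q dl by simp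
    then show "x = y"
      using w comp_eq_whisker[OF dl(2), of x] comp_eq_whisker[OF dl(3), of x] xy dl q by simp
  qed
qed

lemma split_ext_mor_id:
  "split_ext C X A B k a b \<Longrightarrow> split_ext_mor C A B k a b A B k a b (idm A) (idm B)"
  using split_extD unfolding split_ext_mor_def by fastforce

lemma split_ext_mor_comp:
  assumes E: "split_ext C X A B k a b" and E': "split_ext C X A' B' k' a' b'"
    and E'': "split_ext C X A'' B'' k'' a'' b''"
    and M: "split_ext_mor C A B k a b A' B' k' a' b' f g"
    and M': "split_ext_mor C A' B' k' a' b' A'' B'' k'' a'' b'' f' g'"
  shows "split_ext_mor C A B k a b A'' B'' k'' a'' b'' (f' \<cdot> f) (g' \<cdot> g)"
proof -
  note e = split_extD[OF E] and e' = split_extD[OF E'] and e'' = split_extD[OF E'']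
  have m: "f \<in> Hom A A'" "g \<in> Hom B B'" "f \<cdot> k = k'" "a' \<cdot> f = g \<cdot> a" "f \<cdot> b = b' \<cdot> g"
    using M unfolding split_ext_mor_def by auto
  have m': "f' \<in> Hom A' A''" "g' \<in> Hom B' B''" "f' \<cdot> k' = k''" "a'' \<cdot> f' = g' \<cdot> a'"
    "f' \<cdot> b' = b'' \<cdot> g'"
    using M' unfolding split_ext_mor_def by auto
  have "a'' \<cdot> f' \<cdot> f = g' \<cdot> g \<cdot> a"
    using comp_eq_whisker[OF m'(4), of f] m(4) e m m' e' e'' by simp
  moreover have "f' \<cdot> f \<cdot> b = b'' \<cdot> g' \<cdot> g"
    using comp_eq_whisker[OF m'(5), of g] m(5) e m m' e' e'' by simp
  ultimately show ?thesis
    unfolding split_ext_mor_def using m m' e by simp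
qed

lemma pullback_split_ext:
  assumes E': "split_ext C X A' B' k' a' b'" and Pb: "is_pullback C A' B B' a' g P pa pb"
    and s: "s \<in> Hom B P" "pb \<cdot> s = idm B"
    and kk: "kk \<in> Hom X P" "pa \<cdot> kk = k'" "pb \<cdot> kk = Z0 X B"
  shows "split_ext C X P B kk pb s"
  unfolding split_ext_def is_kernel_def
proof (intro conjI allI impI)
  note e' = split_extD[OF E'] and p = pullbackD[OF Pb]
  show "kk \<in> Hom X P" "pb \<in> Hom P B" "s \<in> Hom B P" "pb \<cdot> s = idm B" "pb \<cdot> kk = Z0 X B"
    using kk s p by auto
  fix T t assume t: "t \<in> Hom T P" "pb \<cdot> t = Z0 T B"
  have "a' \<cdot> (pa \<cdot> t) = g \<cdot> (pb \<cdot> t)" using comp_eq_comp_whisker[OF p(5), of t] t p by simp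
  also have "\<dots> = Z0 T B'" using t p dm_in_Ob[of t] by simp
  finally obtain h where h: "h \<in> Hom T X" "k' \<cdot> h = pa \<cdot> t"
    using kernel_lift[OF e'(5), of "pa \<cdot> t" T] t p by auto
  have kkh: "pa \<cdot> (kk \<cdot> h') = k' \<cdot> h'" "pb \<cdot> (kk \<cdot> h') = Z0 T B" if "h' \<in> Hom T X" for h'
    using comp_eq_whisker[OF kk(2), of h'] comp_eq_whisker[OF kk(3), of h'] that kk p by auto
  have "kk \<cdot> h = t" by (rule pullback_arr_eqI[OF Pb]) (use kkh[OF h(1)] h t kk in auto)
  then show "\<exists>!h. h \<in> Hom T X \<and> kk \<cdot> h = t"
    using h kkh(1) kernel_arr_eqI[OF e'(5), of _ T h] by (metis in_Hom_iff)
qed (use kk pullbackD[OF Pb] in auto)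

lemma pullback_replace_iso:
  assumes Pb: "is_pullback C A' B B' a' g P pa pb"
    and h: "h \<in> Hom A P" "h' \<in> Hom P A" "h' \<cdot> h = idm A" "h \<cdot> h' = idm P"
    and f: "pa \<cdot> h = f" and a: "pb \<cdot> h = a"
  shows "is_pullback C A' B B' a' g A f a"
  unfolding is_pullback_def
proof (intro conjI allI impI)
  note p = pullbackD[OF Pb]
  show "a' \<in> Hom A' B'" "g \<in> Hom B B'" "f \<in> Hom A A'" "a \<in> Hom A B" using p h f a by auto
  show "a' \<cdot> f = g \<cdot> a" using comp_eq_comp_whisker[OF p(5), of h] p h f a by simp
  fix T x y assume x: "x \<in> Hom T A'" and y: "y \<in> Hom T B" and xy: "a' \<cdot> x = g \<cdot> y"
  obtain z where z: "z \<in> Hom T P" "pa \<cdot> z = x" "pb \<cdot> z = y"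
    using pullback_lift[OF Pb x y xy] by blast
  have hh': "h \<cdot> (h' \<cdot> z) = z" using comp_eq_whisker[OF h(4), of z] h z by simp
  show "\<exists>!w. w \<in> Hom T A \<and> f \<cdot> w = x \<and> a \<cdot> w = y"
  proof (rule ex1I[of _ "h' \<cdot> z"])
    show "h' \<cdot> z \<in> Hom T A \<and> f \<cdot> (h' \<cdot> z) = x \<and> a \<cdot> (h' \<cdot> z) = y"
      using hh' z h p f a by (auto simp flip: f a)
    fix w assume w: "w \<in> Hom T A \<and> f \<cdot> w = x \<and> a \<cdot> w = y"
    have "h \<cdot> w = z" by (rule pullback_arr_eqI[OF Pb]) (use w z h p f a in auto)
    then show "w = h' \<cdot> z" using comp_eq_whisker[OF h(3), of w] w h by auto
  qed
qed

text \<open>Compare with the pullback of the codomain extension along the base map, using the split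
  short five lemma.\<close>

lemma split_ext_mor_pullback:
  assumes E: "split_ext C X A B k a b" and E': "split_ext C X A' B' k' a' b'"
    and M: "split_ext_mor C A B k a b A' B' k' a' b' f g"
  shows "is_pullback C A' B B' a' g A f a"
proof -
  note e = split_extD[OF E] and e' = split_extD[OF E']
  have f: "f \<in> Hom A A'" and g: "g \<in> Hom B B'" and fk: "f \<cdot> k = k'" and af: "a' \<cdot> f = g \<cdot> a"
    and fb: "f \<cdot> b = b' \<cdot> g"
    using M unfolding split_ext_mor_def by auto
  obtain P pa pb where Pb: "is_pullback C A' B B' a' g P pa pb"
    using pullback_exists e'(2) g by blast
  note p = pullbackD[OF Pb]
  have "a' \<cdot> (b' \<cdot> g) = g \<cdot> idm B" using comp_eq_whisker[OF e'(4), of g] e' g by simp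
  then obtain s where s: "s \<in> Hom B P" "pa \<cdot> s = b' \<cdot> g" "pb \<cdot> s = idm B"
    using pullback_lift[OF Pb, of "b' \<cdot> g" B "idm B"] g e' by auto
  have "a' \<cdot> k' = g \<cdot> Z0 X B" using kernelD[OF e'(5)] g e' dm_in_Ob[of k'] by simp
  then obtain kk where kk: "kk \<in> Hom X P" "pa \<cdot> kk = k'" "pb \<cdot> kk = Z0 X B"
    using pullback_lift[OF Pb, of k' X "Z0 X B"] e' e by auto
  note SE = pullback_split_ext[OF E' Pb s(1,3) kk]
  obtain h where h: "h \<in> Hom A P" "pa \<cdot> h = f" "pb \<cdot> h = a"
    using pullback_lift[OF Pb f e(2) af] by blast
  have hP: "pa \<cdot> (h \<cdot> x) = f \<cdot> x" "pb \<cdot> (h \<cdot> x) = a \<cdot> x" if "x \<in> Hom D A" for x D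
    using comp_eq_whisker[OF h(2), of x] comp_eq_whisker[OF h(3), of x] that h p by auto
  have "h \<cdot> k = kk"
    by (rule pullback_arr_eqI[OF Pb]) (use hP[OF e(1)] fk kk kernelD[OF e(5)] h e in auto)
  moreover have "h \<cdot> b = s"
    by (rule pullback_arr_eqI[OF Pb]) (use hP[OF e(3)] fb s h e in auto)
  ultimately obtain h' where "h' \<in> Hom P A" "h' \<cdot> h = idm A" "h \<cdot> h' = idm P"
    using split_short_five[OF E SE h(1) _ h(3)] by blast
  then show ?thesis using pullback_replace_iso[OF Pb h(1) _ _ _ h(2,3)] by blast
qed

lemma kernel_pair_split_ext:
  assumes E: "split_ext C X A B k a b"
  obtains Q qa qb dl kq where "is_pullback C A A B a a Q qa qb"
    "dl \<in> Hom A Q" "qa \<cdot> dl = idm A" "qb \<cdot> dl = idm A"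
    "kq \<in> Hom X Q" "qa \<cdot> kq = k" "qb \<cdot> kq = Z0 X A" "split_ext C X Q A kq qb dl"
proof -
  note e = split_extD[OF E]
  obtain Q qa qb where Q: "is_pullback C A A B a a Q qa qb" using pullback_exists e by blast
  obtain dl where dl: "dl \<in> Hom A Q" "qa \<cdot> dl = idm A" "qb \<cdot> dl = idm A"
    using pullback_lift[OF Q, of "idm A" A "idm A"] e by auto
  obtain kq where kq: "kq \<in> Hom X Q" "qa \<cdot> kq = k" "qb \<cdot> kq = Z0 X A"
    using pullback_lift[OF Q, of k X "Z0 X A"] kernelD[OF e(5)] e by auto
  show ?thesis using that[OF Q dl kq pullback_split_ext[OF E Q dl(1,3) kq]] .
qed

subsection \<open>Equivalence relations\<close>

lemma pullback_mono:
  assumes Pb: "is_pullback C A B Y f g P p q" and f: "is_mono C f"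
  shows "is_mono C q"
proof -
  note pb = pullbackD[OF Pb]
  show ?thesis
  proof (rule is_monoI[OF pb(4)])
    fix T x x' assume x: "x \<in> Hom T P" "x' \<in> Hom T P" "q \<cdot> x = q \<cdot> x'"
    have "f \<cdot> (p \<cdot> x) = f \<cdot> (p \<cdot> x')"
      using comp_eq_comp_whisker[OF pb(5), of x] comp_eq_comp_whisker[OF pb(5), of x'] x pb by simp
    then have "p \<cdot> x = p \<cdot> x'" using is_monoD[OF f pb(1), of "p \<cdot> x" T "p \<cdot> x'"] x pb by simp
    then show "x = x'" using pullback_arr_eqI[OF Pb x(1,2)] x(3) by simp
  qed
qed

lemma mono_pair_iff_jointly_monic:
  assumes P: "is_product C Y Y' P y1 y2" and rho: "rho \<in> Hom R P" "y1 \<cdot> rho = r1" "y2 \<cdot> rho = r2"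
  shows "is_mono C rho \<longleftrightarrow> jointly_monic C R r1 r2"
proof -
  note y = productD[OF P]
  have rho_comp: "y1 \<cdot> (rho \<cdot> a) = r1 \<cdot> a" "y2 \<cdot> (rho \<cdot> a) = r2 \<cdot> a" if "a \<in> Hom T R" for a T
    using comp_eq_whisker[OF rho(2), of a] comp_eq_whisker[OF rho(3), of a] that rho y by auto
  have "rho \<cdot> a = rho \<cdot> b \<longleftrightarrow> r1 \<cdot> a = r1 \<cdot> b \<and> r2 \<cdot> a = r2 \<cdot> b"
    if "a \<in> Hom T R" "b \<in> Hom T R" for a b T
    using rho_comp[OF that(1)] rho_comp[OF that(2)] product_arr_eqI[OF P, of "rho \<cdot> a" T "rho \<cdot> b"]
      that rho by auto
  then show ?thesis
    unfolding jointly_monic_def is_mono_def using rho by auto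
qed

lemma pullback_over_product_commutes:
  assumes P: "is_product C Y Y' P y1 y2"
    and a: "a \<in> Hom A P" "y1 \<cdot> a = a1" "y2 \<cdot> a = a2"
    and b: "b \<in> Hom B P" "y1 \<cdot> b = b1" "y2 \<cdot> b = b2"
    and L: "is_pullback C A B P a b L l l'" and s: "s \<in> Hom W L"
  shows "a1 \<cdot> (l \<cdot> s) = b1 \<cdot> (l' \<cdot> s)" "a2 \<cdot> (l \<cdot> s) = b2 \<cdot> (l' \<cdot> s)"
proof -
  note y = productD[OF P] and p = pullbackD[OF L]
  have las: "a \<cdot> (l \<cdot> s) = b \<cdot> (l' \<cdot> s)" using comp_eq_comp_whisker[OF p(5), of s] s p by simp
  show "a1 \<cdot> (l \<cdot> s) = b1 \<cdot> (l' \<cdot> s)"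
    using comp_eq_whisker[OF a(2), of "l \<cdot> s"] comp_eq_whisker[OF b(2), of "l' \<cdot> s"] las s p y
    by simp
  show "a2 \<cdot> (l \<cdot> s) = b2 \<cdot> (l' \<cdot> s)"
    using comp_eq_whisker[OF a(3), of "l \<cdot> s"] comp_eq_whisker[OF b(3), of "l' \<cdot> s"] las s p y
    by simp
qed

lemma pullback_over_product_lift:
  assumes P: "is_product C Y Y' P y1 y2"
    and a: "a \<in> Hom A P" "y1 \<cdot> a = a1" "y2 \<cdot> a = a2"
    and b: "b \<in> Hom B P" "y1 \<cdot> b = b1" "y2 \<cdot> b = b2"
    and L: "is_pullback C A B P a b L l l'"
    and t: "t \<in> Hom W A" "t' \<in> Hom W B" "a1 \<cdot> t = b1 \<cdot> t'" "a2 \<cdot> t = b2 \<cdot> t'"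
  shows "\<exists>v. v \<in> Hom W L \<and> l \<cdot> v = t \<and> l' \<cdot> v = t'"
proof -
  note y = productD[OF P]
  have "a \<cdot> t = b \<cdot> t'"
  proof (rule product_arr_eqI[OF P])
    show "y1 \<cdot> (a \<cdot> t) = y1 \<cdot> (b \<cdot> t')"
      using comp_eq_whisker[OF a(2), of t] comp_eq_whisker[OF b(2), of t'] t a b y by simp
    show "y2 \<cdot> (a \<cdot> t) = y2 \<cdot> (b \<cdot> t')"
      using comp_eq_whisker[OF a(3), of t] comp_eq_whisker[OF b(3), of t'] t a b y by simp
  qed (use t a b in auto)
  then show ?thesis using pullback_lift[OF L t(1,2)] by blast
qed

text \<open>The classical Mal'tsev argument: relate the kernel pair \<open>Q\<close> of \<open>r1\<close> to \<open>R\<close> through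
  \<open>(t1, t2) \<mapsto> (r2 t1, r2 t2)\<close>; the part \<open>M\<close> of \<open>Q\<close> mapped into \<open>R\<close> contains the kernel and the
  diagonal section of the split extension \<open>Q \<rightleftarrows> R\<close>, hence is all of \<open>Q\<close>.\<close>

lemma reflexive_relation_euclidean:
  assumes r: "r1 \<in> Hom R Y" "r2 \<in> Hom R Y" and jm: "jointly_monic C R r1 r2"
    and dl: "dl \<in> Hom Y R" "r1 \<cdot> dl = idm Y" "r2 \<cdot> dl = idm Y"
    and t: "t1 \<in> Hom W R" "t2 \<in> Hom W R" "r1 \<cdot> t1 = r1 \<cdot> t2"
  shows "\<exists>t. t \<in> Hom W R \<and> r1 \<cdot> t = r2 \<cdot> t1 \<and> r2 \<cdot> t = r2 \<cdot> t2"
proof -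
  have Y: "Y \<in> Ob" and R: "R \<in> Ob" using r by auto
  obtain Q qa qb where Q: "is_pullback C R R Y r1 r1 Q qa qb" using pullback_exists r by blast
  note q = pullbackD[OF Q]
  obtain s where s: "s \<in> Hom R Q" "qa \<cdot> s = idm R" "qb \<cdot> s = idm R"
    using pullback_lift[OF Q, of "idm R" R "idm R"] R r by auto
  obtain K kp where K: "is_kernel C K Q R kp qa" using kernel_exists q by blast
  note kp = kernelD[OF K]
  have SE: "split_ext C K Q R kp qa s" unfolding split_ext_def using K kp q s by auto
  obtain YY y1 y2 where YY: "is_product C Y Y YY y1 y2" using product_exists Y by blast
  note y = productD[OF YY]
  obtain rho where rho: "rho \<in> Hom R YY" "y1 \<cdot> rho = r1" "y2 \<cdot> rho = r2"
    using product_lift[OF YY r] by blast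
  obtain sg where sg: "sg \<in> Hom Q YY" "y1 \<cdot> sg = r2 \<cdot> qa" "y2 \<cdot> sg = r2 \<cdot> qb"
    using product_lift[OF YY, of "r2 \<cdot> qa" Q "r2 \<cdot> qb"] r q by auto
  obtain M mw m where M: "is_pullback C R Q YY rho sg M mw m" using pullback_exists rho sg by blast
  note mm = pullbackD[OF M]
  note lift = pullback_over_product_lift[OF YY rho sg M]
  have "is_mono C m" using pullback_mono[OF M] mono_pair_iff_jointly_monic[OF YY rho] jm by simp
  moreover obtain s' where "s' \<in> Hom R M" "m \<cdot> s' = s"
  proof -
    have "r1 \<cdot> (dl \<cdot> r2) = (r2 \<cdot> qa) \<cdot> s" "r2 \<cdot> (dl \<cdot> r2) = (r2 \<cdot> qb) \<cdot> s"
      using comp_eq_whisker[OF dl(2), of r2] comp_eq_whisker[OF dl(3), of r2] s dl r q by auto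
    then show ?thesis using lift[of "dl \<cdot> r2" R s] that dl r s by auto
  qed
  moreover obtain k' where "k' \<in> Hom K M" "m \<cdot> k' = kp"
  proof -
    have "r1 \<cdot> (qb \<cdot> kp) = r1 \<cdot> (qa \<cdot> kp)" using comp_eq_comp_whisker[OF q(5), of kp] q kp by simp
    also have "\<dots> = r2 \<cdot> (qa \<cdot> kp)" using kp q r dm_in_Ob[of kp] by simp
    finally have "r1 \<cdot> (qb \<cdot> kp) = (r2 \<cdot> qa) \<cdot> kp" using kp q r by simp
    moreover have "r2 \<cdot> (qb \<cdot> kp) = (r2 \<cdot> qb) \<cdot> kp" using kp q r by simp
    ultimately show ?thesis using lift[of "qb \<cdot> kp" K kp] that kp q by auto
  qed
  ultimately obtain g where g: "g \<in> Hom Q M" "m \<cdot> g = idm Q"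
    using mono_covering_split_ext_iso[OF SE mm(4)] by blast
  obtain x where x: "x \<in> Hom W Q" "qa \<cdot> x = t1" "qb \<cdot> x = t2" using pullback_lift[OF Q t] by blast
  have mgx: "m \<cdot> (g \<cdot> x) = x" using comp_eq_whisker[OF g(2), of x] g x mm by simp
  show ?thesis
  proof (intro exI conjI)
    show "mw \<cdot> (g \<cdot> x) \<in> Hom W R" using g x mm by simp
    show "r1 \<cdot> (mw \<cdot> (g \<cdot> x)) = r2 \<cdot> t1" "r2 \<cdot> (mw \<cdot> (g \<cdot> x)) = r2 \<cdot> t2"
      using pullback_over_product_commutes[OF YY rho sg M, of "g \<cdot> x" W] mgx g x q r x mm
      by (simp_all add: comp_eq_whisker[OF x(2)] comp_eq_whisker[OF x(3)])
  qed
qed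

lemma equiv_relI:
  assumes r: "r1 \<in> Hom R Y" "r2 \<in> Hom R Y" and jm: "jointly_monic C R r1 r2"
    and refl: "\<And>W x. x \<in> Hom W Y \<Longrightarrow> \<exists>t. t \<in> Hom W R \<and> r1 \<cdot> t = x \<and> r2 \<cdot> t = x"
    and sym: "\<And>W t. t \<in> Hom W R \<Longrightarrow> \<exists>t'. t' \<in> Hom W R \<and> r1 \<cdot> t' = r2 \<cdot> t \<and> r2 \<cdot> t' = r1 \<cdot> t"
    and trans: "\<And>W t1 t2. t1 \<in> Hom W R \<Longrightarrow> t2 \<in> Hom W R \<Longrightarrow> r2 \<cdot> t1 = r1 \<cdot> t2 \<Longrightarrow>
      \<exists>t. t \<in> Hom W R \<and> r1 \<cdot> t = r1 \<cdot> t1 \<and> r2 \<cdot> t = r2 \<cdot> t2"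
  shows "is_equiv_rel C Y R r1 r2"
proof -
  have "(\<forall>x\<in>Hom W Y. \<exists>t\<in>Hom W R. r1 \<cdot> t = x \<and> r2 \<cdot> t = x) \<and>
    (\<forall>x y. (\<exists>t\<in>Hom W R. r1 \<cdot> t = x \<and> r2 \<cdot> t = y) \<longrightarrow> (\<exists>t\<in>Hom W R. r1 \<cdot> t = y \<and> r2 \<cdot> t = x)) \<and>
    (\<forall>x y z. (\<exists>t\<in>Hom W R. r1 \<cdot> t = x \<and> r2 \<cdot> t = y) \<longrightarrow> (\<exists>t\<in>Hom W R. r1 \<cdot> t = y \<and> r2 \<cdot> t = z)
       \<longrightarrow> (\<exists>t\<in>Hom W R. r1 \<cdot> t = x \<and> r2 \<cdot> t = z))" for W
  proof (intro conjI allI impI ballI)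
    show "\<exists>t\<in>Hom W R. r1 \<cdot> t = x \<and> r2 \<cdot> t = x" if "x \<in> Hom W Y" for x
      using refl[OF that] by blast
    show "\<exists>t\<in>Hom W R. r1 \<cdot> t = y \<and> r2 \<cdot> t = x" if "\<exists>t\<in>Hom W R. r1 \<cdot> t = x \<and> r2 \<cdot> t = y" for x y
      using that sym by blast
    show "\<exists>t\<in>Hom W R. r1 \<cdot> t = x \<and> r2 \<cdot> t = z"
      if "\<exists>t\<in>Hom W R. r1 \<cdot> t = x \<and> r2 \<cdot> t = y" "\<exists>t\<in>Hom W R. r1 \<cdot> t = y \<and> r2 \<cdot> t = z" for x y z
      using that trans by (metis (no_types, lifting))
  qed
  then show ?thesis using r jm unfolding is_equiv_rel_def jointly_monic_def Let_def by blast
qed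

lemma equiv_relD:
  assumes "is_equiv_rel C Y R r1 r2"
  shows "r1 \<in> Hom R Y" "r2 \<in> Hom R Y" "jointly_monic C R r1 r2"
  using assms unfolding is_equiv_rel_def jointly_monic_def by blast+

lemma equiv_rel_refl:
  "is_equiv_rel C Y R r1 r2 \<Longrightarrow> x \<in> Hom W Y \<Longrightarrow> \<exists>t. t \<in> Hom W R \<and> r1 \<cdot> t = x \<and> r2 \<cdot> t = x"
  unfolding is_equiv_rel_def Let_def by blast

lemma equiv_rel_sym:
  "is_equiv_rel C Y R r1 r2 \<Longrightarrow> t \<in> Hom W R \<Longrightarrow>
   \<exists>t'. t' \<in> Hom W R \<and> r1 \<cdot> t' = r2 \<cdot> t \<and> r2 \<cdot> t' = r1 \<cdot> t"
  unfolding is_equiv_rel_def Let_def by blast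

lemma equiv_rel_trans:
  assumes "is_equiv_rel C Y R r1 r2" "t1 \<in> Hom W R" "t2 \<in> Hom W R" "r2 \<cdot> t1 = r1 \<cdot> t2"
  shows "\<exists>t. t \<in> Hom W R \<and> r1 \<cdot> t = r1 \<cdot> t1 \<and> r2 \<cdot> t = r2 \<cdot> t2"
proof -
  have "\<forall>x y z. (\<exists>t\<in>Hom W R. r1 \<cdot> t = x \<and> r2 \<cdot> t = y) \<longrightarrow> (\<exists>t\<in>Hom W R. r1 \<cdot> t = y \<and> r2 \<cdot> t = z)
       \<longrightarrow> (\<exists>t\<in>Hom W R. r1 \<cdot> t = x \<and> r2 \<cdot> t = z)"
    using assms(1) unfolding is_equiv_rel_def Let_def by blast
  then show ?thesis using assms(2-4) by (metis (no_types, lifting))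
qed

lemma reflexive_relation_is_equiv_rel:
  assumes r: "r1 \<in> Hom R Y" "r2 \<in> Hom R Y" and jm: "jointly_monic C R r1 r2"
    and dl: "dl \<in> Hom Y R" "r1 \<cdot> dl = idm Y" "r2 \<cdot> dl = idm Y"
  shows "is_equiv_rel C Y R r1 r2"
proof -
  note euclid = reflexive_relation_euclidean[OF r jm dl]
  have sym: "\<exists>t'. t' \<in> Hom W R \<and> r1 \<cdot> t' = r2 \<cdot> t \<and> r2 \<cdot> t' = r1 \<cdot> t" if t: "t \<in> Hom W R" for W t
  proof -
    have "r1 \<cdot> (dl \<cdot> (r1 \<cdot> t)) = r1 \<cdot> t" "r2 \<cdot> (dl \<cdot> (r1 \<cdot> t)) = r1 \<cdot> t"
      using comp_eq_whisker[OF dl(2), of "r1 \<cdot> t"] comp_eq_whisker[OF dl(3), of "r1 \<cdot> t"] t r dl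
      by auto
    then show ?thesis using euclid[OF t, of "dl \<cdot> (r1 \<cdot> t)"] t r dl by auto
  qed
  show ?thesis
  proof (rule equiv_relI[OF r jm])
    fix W x assume "x \<in> Hom W Y"
    then show "\<exists>t. t \<in> Hom W R \<and> r1 \<cdot> t = x \<and> r2 \<cdot> t = x"
      using comp_eq_whisker[OF dl(2), of x] comp_eq_whisker[OF dl(3), of x] r dl
      by (intro exI[of _ "dl \<cdot> x"]) auto
  next
    fix W t assume "t \<in> Hom W R"
    then show "\<exists>t'. t' \<in> Hom W R \<and> r1 \<cdot> t' = r2 \<cdot> t \<and> r2 \<cdot> t' = r1 \<cdot> t" by (rule sym)
  next
    fix W t1 t2 assume t: "t1 \<in> Hom W R" "t2 \<in> Hom W R" "r2 \<cdot> t1 = r1 \<cdot> t2"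
    obtain t1' where t1': "t1' \<in> Hom W R" "r1 \<cdot> t1' = r2 \<cdot> t1" "r2 \<cdot> t1' = r1 \<cdot> t1"
      using sym[OF t(1)] by blast
    then show "\<exists>t. t \<in> Hom W R \<and> r1 \<cdot> t = r1 \<cdot> t1 \<and> r2 \<cdot> t = r2 \<cdot> t2"
      using euclid[OF t1'(1) t(2)] t by auto
  qed
qed

lemma meet_inverse_image_exists:
  assumes R: "is_equiv_rel C Y R r1 r2" and R': "is_equiv_rel C T R' r1' r2'" and ph: "ph \<in> Hom Y T"
  shows "\<exists>L l l'. meet_inverse_image C R r1 r2 R' r1' r2' ph L l l'"
proof -
  note r = equiv_relD(1,2)[OF R]
    and r' = equiv_relD(1,2)[OF R']
  obtain TT y1 y2 where TT: "is_product C T T TT y1 y2" using product_exists ph by fastforce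
  obtain a where a: "a \<in> Hom R TT" "y1 \<cdot> a = ph \<cdot> r1" "y2 \<cdot> a = ph \<cdot> r2"
    using product_lift[OF TT, of "ph \<cdot> r1" R "ph \<cdot> r2"] ph r by auto
  obtain b where b: "b \<in> Hom R' TT" "y1 \<cdot> b = r1'" "y2 \<cdot> b = r2'"
    using product_lift[OF TT r'] by blast
  obtain L l l' where L: "is_pullback C R R' TT a b L l l'" using pullback_exists a b by blast
  note p = pullbackD[OF L]
  have "meet_inverse_image C R r1 r2 R' r1' r2' ph L l l'"
    unfolding meet_inverse_image_def
  proof (intro conjI allI impI)
    show "jointly_monic C L l l'"
      unfolding jointly_monic_def using pullback_arr_eqI[OF L] by blast
    show "l \<in> Hom L R" "l' \<in> Hom L R'" using p by auto
    fix W
    show "ph \<cdot> (r1 \<cdot> (l \<cdot> x)) = r1' \<cdot> (l' \<cdot> x)" "ph \<cdot> (r2 \<cdot> (l \<cdot> x)) = r2' \<cdot> (l' \<cdot> x)"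
      if "x \<in> Hom W L" for x
      using pullback_over_product_commutes[OF TT a b L that] that r ph p by simp_all
    show "\<exists>v. v \<in> Hom W L \<and> l \<cdot> v = t \<and> l' \<cdot> v = t'"
      if "t \<in> Hom W R" "t' \<in> Hom W R'" "ph \<cdot> (r1 \<cdot> t) = r1' \<cdot> t'" "ph \<cdot> (r2 \<cdot> t) = r2' \<cdot> t'"
      for t t'
      using pullback_over_product_lift[OF TT a b L that(1,2)] that r ph by simp
  qed
  then show ?thesis by blast
qed

lemma meet_inverse_imageD:
  assumes "meet_inverse_image C R r1 r2 R' r1' r2' ph L l l'"
  shows "jointly_monic C L l l'" "l \<in> Hom L R" "l' \<in> Hom L R'"
    "\<And>W x. x \<in> Hom W L \<Longrightarrow> ph \<cdot> (r1 \<cdot> (l \<cdot> x)) = r1' \<cdot> (l' \<cdot> x)"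
    "\<And>W x. x \<in> Hom W L \<Longrightarrow> ph \<cdot> (r2 \<cdot> (l \<cdot> x)) = r2' \<cdot> (l' \<cdot> x)"
    "\<And>W t t'. t \<in> Hom W R \<Longrightarrow> t' \<in> Hom W R' \<Longrightarrow> ph \<cdot> (r1 \<cdot> t) = r1' \<cdot> t' \<Longrightarrow>
      ph \<cdot> (r2 \<cdot> t) = r2' \<cdot> t' \<Longrightarrow> \<exists>v. v \<in> Hom W L \<and> l \<cdot> v = t \<and> l' \<cdot> v = t'"
  using assms unfolding meet_inverse_image_def by blast+

lemma equiv_rel_meet_inverse_image:
  assumes R: "is_equiv_rel C Y R r1 r2" and R': "is_equiv_rel C T R' r1' r2'"
    and ph: "ph \<in> Hom Y T" and M: "meet_inverse_image C R r1 r2 R' r1' r2' ph L l l'"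
  shows "is_equiv_rel C Y L (r1 \<cdot> l) (r2 \<cdot> l)"
proof -
  note jm = meet_inverse_imageD(1)[OF M] and l = meet_inverse_imageD(2,3)[OF M]
    and commutes = meet_inverse_imageD(4,5)[OF M] and lift = meet_inverse_imageD(6)[OF M]
    and r = equiv_relD(1,2)[OF R]
  show ?thesis
  proof (rule equiv_relI)
    show "r1 \<cdot> l \<in> Hom L Y" "r2 \<cdot> l \<in> Hom L Y" using r l by auto
    show "jointly_monic C L (r1 \<cdot> l) (r2 \<cdot> l)" unfolding jointly_monic_def
    proof (intro allI impI)
      fix W s1 s2 assume s: "s1 \<in> Hom W L" "s2 \<in> Hom W L"
        "(r1 \<cdot> l) \<cdot> s1 = (r1 \<cdot> l) \<cdot> s2" "(r2 \<cdot> l) \<cdot> s1 = (r2 \<cdot> l) \<cdot> s2"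
      have ls: "l \<cdot> s1 = l \<cdot> s2"
        using equiv_relD(3)[OF R] s r l unfolding jointly_monic_def by simp
      then have "r1' \<cdot> (l' \<cdot> s1) = r1' \<cdot> (l' \<cdot> s2)" "r2' \<cdot> (l' \<cdot> s1) = r2' \<cdot> (l' \<cdot> s2)"
        using commutes[OF s(1)] commutes[OF s(2)] by simp_all
      then have "l' \<cdot> s1 = l' \<cdot> s2"
        using equiv_relD(3)[OF R'] s l unfolding jointly_monic_def by simp
      then show "s1 = s2" using jm s(1,2) ls unfolding jointly_monic_def by blast
    qed
  next
    fix W x assume x: "x \<in> Hom W Y"
    obtain t where t: "t \<in> Hom W R" "r1 \<cdot> t = x" "r2 \<cdot> t = x" using equiv_rel_refl[OF R x] by blast
    obtain t' where t': "t' \<in> Hom W R'" "r1' \<cdot> t' = ph \<cdot> x" "r2' \<cdot> t' = ph \<cdot> x"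
      using equiv_rel_refl[OF R', of "ph \<cdot> x" W] x ph by auto
    obtain v where v: "v \<in> Hom W L" "l \<cdot> v = t" using lift[OF t(1) t'(1)] t t' by auto
    then have "(r1 \<cdot> l) \<cdot> v = x" "(r2 \<cdot> l) \<cdot> v = x" using t(2,3) r l by simp_all
    then show "\<exists>v. v \<in> Hom W L \<and> (r1 \<cdot> l) \<cdot> v = x \<and> (r2 \<cdot> l) \<cdot> v = x" using v by blast
  next
    fix W s assume s: "s \<in> Hom W L"
    obtain u where u: "u \<in> Hom W R" "r1 \<cdot> u = r2 \<cdot> (l \<cdot> s)" "r2 \<cdot> u = r1 \<cdot> (l \<cdot> s)"
      using equiv_rel_sym[OF R, of "l \<cdot> s" W] s l by auto
    obtain u' where u': "u' \<in> Hom W R'" "r1' \<cdot> u' = r2' \<cdot> (l' \<cdot> s)" "r2' \<cdot> u' = r1' \<cdot> (l' \<cdot> s)"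
      using equiv_rel_sym[OF R', of "l' \<cdot> s" W] s l by auto
    obtain v where v: "v \<in> Hom W L" "l \<cdot> v = u"
      using lift[OF u(1) u'(1)] u u' commutes[OF s] by auto
    then have "(r1 \<cdot> l) \<cdot> v = (r2 \<cdot> l) \<cdot> s" "(r2 \<cdot> l) \<cdot> v = (r1 \<cdot> l) \<cdot> s"
      using u(2,3) s r l by simp_all
    then show "\<exists>v. v \<in> Hom W L \<and> (r1 \<cdot> l) \<cdot> v = (r2 \<cdot> l) \<cdot> s \<and> (r2 \<cdot> l) \<cdot> v = (r1 \<cdot> l) \<cdot> s"
      using v by blast
  next
    fix W s1 s2 assume s: "s1 \<in> Hom W L" "s2 \<in> Hom W L" "(r2 \<cdot> l) \<cdot> s1 = (r1 \<cdot> l) \<cdot> s2"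
    have s12: "r2 \<cdot> (l \<cdot> s1) = r1 \<cdot> (l \<cdot> s2)" using s r l by simp
    obtain u where u: "u \<in> Hom W R" "r1 \<cdot> u = r1 \<cdot> (l \<cdot> s1)" "r2 \<cdot> u = r2 \<cdot> (l \<cdot> s2)"
      using equiv_rel_trans[OF R, of "l \<cdot> s1" W "l \<cdot> s2"] s12 s l by auto
    have "r2' \<cdot> (l' \<cdot> s1) = ph \<cdot> (r2 \<cdot> (l \<cdot> s1))" using commutes[OF s(1)] by simp
    also have "\<dots> = ph \<cdot> (r1 \<cdot> (l \<cdot> s2))" using s12 by simp
    also have "\<dots> = r1' \<cdot> (l' \<cdot> s2)" using commutes[OF s(2)] by simp
    finally obtain u' where u': "u' \<in> Hom W R'"
        "r1' \<cdot> u' = r1' \<cdot> (l' \<cdot> s1)" "r2' \<cdot> u' = r2' \<cdot> (l' \<cdot> s2)"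
      using equiv_rel_trans[OF R', of "l' \<cdot> s1" W "l' \<cdot> s2"] s l by auto
    obtain v where v: "v \<in> Hom W L" "l \<cdot> v = u"
      using lift[OF u(1) u'(1)] u u' commutes[OF s(1)] commutes[OF s(2)] by auto
    then have "(r1 \<cdot> l) \<cdot> v = (r1 \<cdot> l) \<cdot> s1" "(r2 \<cdot> l) \<cdot> v = (r2 \<cdot> l) \<cdot> s2"
      using u(2,3) s r l by simp_all
    then show "\<exists>v. v \<in> Hom W L \<and> (r1 \<cdot> l) \<cdot> v = (r1 \<cdot> l) \<cdot> s1 \<and> (r2 \<cdot> l) \<cdot> v = (r2 \<cdot> l) \<cdot> s2"
      using v by blast
  qed
qed

subsection \<open>Bourn-normal monomorphisms\<close>

lemma bourn_normal_monoE:
  assumes "bourn_normal_mono C S Y m"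
  obtains R r1 r2 P p1 p2 mt where "m \<in> Hom S Y" "is_mono C m" "is_equiv_rel C Y R r1 r2"
    "is_product C S S P p1 p2" "mt \<in> Hom P R" "r1 \<cdot> mt = m \<cdot> p1" "r2 \<cdot> mt = m \<cdot> p2"
    "is_pullback C R S Y r1 m P mt p1"
  using assms unfolding bourn_normal_mono_def by blast

lemma bourn_normal_split_ext:
  assumes R: "is_equiv_rel C Y R r1 r2" and P: "is_product C X X P p1 p2" and n: "n \<in> Hom X Y"
    and mt: "mt \<in> Hom P R" "r1 \<cdot> mt = n \<cdot> p1"
    and pb: "is_pullback C R X Y r1 n P mt p1"
    and dl: "dl \<in> Hom Y R" "r1 \<cdot> dl = idm Y"
    and d: "d \<in> Hom X P" "p1 \<cdot> d = Z0 X X" "p2 \<cdot> d = idm X"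
  shows "split_ext C X R Y (mt \<cdot> d) r1 dl"
  unfolding split_ext_def is_kernel_def
proof (intro conjI allI impI)
  note r = equiv_relD(1,2)[OF R] and p = productD[OF P]
  show "mt \<cdot> d \<in> Hom X R" "r1 \<in> Hom R Y" "dl \<in> Hom Y R" "r1 \<cdot> dl = idm Y" using mt d dl r by auto
  show "r1 \<cdot> (mt \<cdot> d) = Z0 X Y" using comp_eq_whisker[OF mt(2), of d] d n p mt r by simp
  fix W t assume t: "t \<in> Hom W R" "r1 \<cdot> t = Z0 W Y"
  have "r1 \<cdot> t = n \<cdot> Z0 W X" using t n dm_in_Ob[of t] by simp
  then obtain h where h: "h \<in> Hom W P" "mt \<cdot> h = t" "p1 \<cdot> h = Z0 W X"
    using pullback_lift[OF pb t(1), of "Z0 W X"] n t by auto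
  have dh: "d \<cdot> (p2 \<cdot> h) = h"
  proof (rule product_arr_eqI[OF P])
    show "p1 \<cdot> (d \<cdot> (p2 \<cdot> h)) = p1 \<cdot> h" "p2 \<cdot> (d \<cdot> (p2 \<cdot> h)) = p2 \<cdot> h"
      using comp_eq_whisker[OF d(2), of "p2 \<cdot> h"] comp_eq_whisker[OF d(3), of "p2 \<cdot> h"] h d p
      by auto
  qed (use h d p in auto)
  show "\<exists>!x. x \<in> Hom W X \<and> (mt \<cdot> d) \<cdot> x = t"
  proof (rule ex1I[of _ "p2 \<cdot> h"])
    show "p2 \<cdot> h \<in> Hom W X \<and> (mt \<cdot> d) \<cdot> (p2 \<cdot> h) = t" using dh h mt d p by auto
    fix x assume "x \<in> Hom W X \<and> (mt \<cdot> d) \<cdot> x = t"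
    then have x: "x \<in> Hom W X" "mt \<cdot> (d \<cdot> x) = t" using mt d by auto
    have "d \<cdot> x = h"
    proof (rule pullback_arr_eqI[OF pb])
      show "mt \<cdot> (d \<cdot> x) = mt \<cdot> h" using x h by simp
      show "p1 \<cdot> (d \<cdot> x) = p1 \<cdot> h" using comp_eq_whisker[OF d(2), of x] x h d p by auto
    qed (use x h d in auto)
    then show "x = p2 \<cdot> h" using comp_eq_whisker[OF d(3), of x] x d p by auto
  qed
qed (use mt d equiv_relD(1,2)[OF R] in auto)

lemma meet_normal_pullback:
  assumes pbn: "is_pullback C R X Y r1 n P1 mt p1" and P1: "is_product C X X P1 p1 p2"
    and mt: "r2 \<in> Hom R Y" "r2 \<cdot> mt = n \<cdot> p2"
    and pbc: "is_pullback C R' S T r1' (c \<cdot> u) P2 mt' q1" and P2: "is_product C S S P2 q1 q2"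
    and mt': "r2' \<in> Hom R' T" "r2' \<cdot> mt' = (c \<cdot> u) \<cdot> q2"
    and ph: "ph \<in> Hom Y T" and c: "c = ph \<cdot> n" "is_mono C c" and u: "u \<in> Hom S X"
    and M: "meet_inverse_image C R r1 r2 R' r1' r2' ph L l l'"
    and uu: "uu \<in> Hom P2 P1" "p1 \<cdot> uu = u \<cdot> q1" "p2 \<cdot> uu = u \<cdot> q2"
    and mL: "mL \<in> Hom P2 L" "l \<cdot> mL = mt \<cdot> uu" "l' \<cdot> mL = mt'"
  shows "is_pullback C L S Y (r1 \<cdot> l) (n \<cdot> u) P2 mL q1"
  unfolding is_pullback_def
proof (intro conjI allI impI)
  note jm = meet_inverse_imageD(1)[OF M] and l = meet_inverse_imageD(2,3)[OF M]
    and commutes = meet_inverse_imageD(4,5)[OF M]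
  note pn = pullbackD[OF pbn] and pc = pullbackD[OF pbc]
    and p1 = productD[OF P1] and p2 = productD[OF P2]
  have c_hom: "c \<in> Hom X T" using c(1) ph pn(2) by auto
  have ph_n: "ph \<cdot> (n \<cdot> z) = c \<cdot> z" if "z \<in> Hom W X" for z W
    using comp_eq_whisker[OF c(1)[symmetric], of z] that ph pn by simp
  show "r1 \<cdot> l \<in> Hom L Y" "n \<cdot> u \<in> Hom S Y" "mL \<in> Hom P2 L" "q1 \<in> Hom P2 S"
    using pn l u mL p2 by auto
  show "(r1 \<cdot> l) \<cdot> mL = (n \<cdot> u) \<cdot> q1"
    using comp_eq_whisker[OF pn(5), of uu] comp_eq_whisker[OF uu(2)] mL uu pn l u p1 p2 by simp
  fix W x y assume x: "x \<in> Hom W L" and y: "y \<in> Hom W S" and xy: "(r1 \<cdot> l) \<cdot> x = (n \<cdot> u) \<cdot> y"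
  have xy': "r1 \<cdot> (l \<cdot> x) = n \<cdot> (u \<cdot> y)" using xy x y pn l u by simp
  obtain h1 where h1: "h1 \<in> Hom W P1" "mt \<cdot> h1 = l \<cdot> x" "p1 \<cdot> h1 = u \<cdot> y"
    using pullback_lift[OF pbn, of "l \<cdot> x" W "u \<cdot> y"] xy' x y l u by auto
  have "r1' \<cdot> (l' \<cdot> x) = (c \<cdot> u) \<cdot> y"
    using commutes[OF x] xy' ph_n[of "u \<cdot> y"] y u c_hom by simp
  then obtain h2 where h2: "h2 \<in> Hom W P2" "mt' \<cdot> h2 = l' \<cdot> x" "q1 \<cdot> h2 = y"
    using pullback_lift[OF pbc, of "l' \<cdot> x" W y] x y l by auto
  have "c \<cdot> (p2 \<cdot> h1) = ph \<cdot> (r2 \<cdot> (mt \<cdot> h1))"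
    using ph_n[of "p2 \<cdot> h1"] comp_eq_whisker[OF mt(2), of h1] h1 p1 pn mt ph by simp
  also have "\<dots> = r2' \<cdot> (mt' \<cdot> h2)" using commutes[OF x] h1 h2 by simp
  also have "\<dots> = c \<cdot> (u \<cdot> (q2 \<cdot> h2))"
    using comp_eq_whisker[OF mt'(2), of h2] h2 pc mt' c_hom u p2 by simp
  finally have "p2 \<cdot> h1 = u \<cdot> (q2 \<cdot> h2)"
    using is_monoD[OF c(2) c_hom, of "p2 \<cdot> h1" W "u \<cdot> (q2 \<cdot> h2)"] h1 h2 p1 p2 u by simp
  then have "uu \<cdot> h2 = h1"
    using product_arr_eqI[OF P1, of "uu \<cdot> h2" W h1] comp_eq_whisker[OF uu(2), of h2]
      comp_eq_whisker[OF uu(3), of h2] h1 h2 uu p1 p2 u by simp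
  then have mLh2: "mL \<cdot> h2 = x"
    using jm[unfolded jointly_monic_def, rule_format, of "mL \<cdot> h2" W x]
      comp_eq_whisker[OF mL(2), of h2]
      comp_eq_whisker[OF mL(3), of h2] h1 h2 mL x pn l uu by simp
  show "\<exists>!h. h \<in> Hom W P2 \<and> mL \<cdot> h = x \<and> q1 \<cdot> h = y"
  proof (rule ex1I[of _ h2])
    show "h2 \<in> Hom W P2 \<and> mL \<cdot> h2 = x \<and> q1 \<cdot> h2 = y" using h2 mLh2 by simp
    fix h assume h: "h \<in> Hom W P2 \<and> mL \<cdot> h = x \<and> q1 \<cdot> h = y"
    have "mt' \<cdot> h = l' \<cdot> x" using comp_eq_whisker[OF mL(3), of h] h mL l by auto
    then show "h = h2" using pullback_arr_eqI[OF pbc, of h W h2] h h2 by simp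
  qed
qed

lemma bourn_normal_comp_if_image_normal:
  assumes n: "bourn_normal_mono C X Y n" and ph: "ph \<in> Hom Y T" and c: "c = ph \<cdot> n"
    and c_mono: "is_mono C c" and u: "u \<in> Hom S X" and cu: "bourn_normal_mono C S T (c \<cdot> u)"
  shows "bourn_normal_mono C S Y (n \<cdot> u)"
proof -
  obtain R r1 r2 P1 p1 p2 mt where n_hom: "n \<in> Hom X Y" and n_mono: "is_mono C n"
    and R: "is_equiv_rel C Y R r1 r2" and P1: "is_product C X X P1 p1 p2"
    and mt: "mt \<in> Hom P1 R" "r1 \<cdot> mt = n \<cdot> p1" "r2 \<cdot> mt = n \<cdot> p2"
    and pbn: "is_pullback C R X Y r1 n P1 mt p1"
    by (rule bourn_normal_monoE[OF n])
  obtain R' r1' r2' P2 q1 q2 mt' where "c \<cdot> u \<in> Hom S T" and cu_mono: "is_mono C (c \<cdot> u)"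
    and R': "is_equiv_rel C T R' r1' r2'" and P2: "is_product C S S P2 q1 q2"
    and mt': "mt' \<in> Hom P2 R'" "r1' \<cdot> mt' = (c \<cdot> u) \<cdot> q1" "r2' \<cdot> mt' = (c \<cdot> u) \<cdot> q2"
    and pbc: "is_pullback C R' S T r1' (c \<cdot> u) P2 mt' q1"
    by (rule bourn_normal_monoE[OF cu])
  note r = equiv_relD(1,2)[OF R]
    and r' = equiv_relD(1,2)[OF R']
    and p1 = productD[OF P1] and p2 = productD[OF P2]
  have c_hom: "c \<in> Hom X T" using c ph n_hom by simp
  have ph_n: "ph \<cdot> (n \<cdot> z) = c \<cdot> z" if "z \<in> Hom W X" for z W
    using comp_eq_whisker[OF c[symmetric], of z] that ph n_hom by simp
  obtain L l l' where M: "meet_inverse_image C R r1 r2 R' r1' r2' ph L l l'"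
    using meet_inverse_image_exists[OF R R' ph] by blast
  note l = meet_inverse_imageD(2,3)[OF M] and lift = meet_inverse_imageD(6)[OF M]
  have EQL: "is_equiv_rel C Y L (r1 \<cdot> l) (r2 \<cdot> l)"
    by (rule equiv_rel_meet_inverse_image[OF R R' ph M])
  obtain uu where uu: "uu \<in> Hom P2 P1" "p1 \<cdot> uu = u \<cdot> q1" "p2 \<cdot> uu = u \<cdot> q2"
    using product_lift[OF P1, of "u \<cdot> q1" P2 "u \<cdot> q2"] u p2 by auto
  have mt_uu: "r1 \<cdot> (mt \<cdot> uu) = n \<cdot> (u \<cdot> q1)" "r2 \<cdot> (mt \<cdot> uu) = n \<cdot> (u \<cdot> q2)"
    using comp_eq_whisker[OF mt(2), of uu] comp_eq_whisker[OF mt(3), of uu] uu mt r p1 n_hom by auto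
  obtain mL where mL: "mL \<in> Hom P2 L" "l \<cdot> mL = mt \<cdot> uu" "l' \<cdot> mL = mt'"
  proof -
    have "ph \<cdot> (r1 \<cdot> (mt \<cdot> uu)) = r1' \<cdot> mt'" "ph \<cdot> (r2 \<cdot> (mt \<cdot> uu)) = r2' \<cdot> mt'"
      using mt_uu mt' ph_n[of "u \<cdot> q1"] ph_n[of "u \<cdot> q2"] u p2 c_hom by simp_all
    then show ?thesis using lift[of "mt \<cdot> uu" P2 mt'] that mt uu mt' by auto
  qed
  have mL_eq: "(r1 \<cdot> l) \<cdot> mL = (n \<cdot> u) \<cdot> q1" "(r2 \<cdot> l) \<cdot> mL = (n \<cdot> u) \<cdot> q2"
    using mt_uu mL r l n_hom u p2 by simp_all
  have "is_pullback C L S Y (r1 \<cdot> l) (n \<cdot> u) P2 mL q1"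
    by (rule meet_normal_pullback[OF pbn P1 r(2) mt(3) pbc P2 r'(2) mt'(3) ph c c_mono u M uu mL])
  moreover have "is_mono C (n \<cdot> u)"
    using mono_comp[OF mono_cancel[OF cu_mono u c_hom] n_mono u n_hom] .
  ultimately show ?thesis
    unfolding bourn_normal_mono_def
    by (intro conjI exI[of _ L] exI[of _ "r1 \<cdot> l"] exI[of _ "r2 \<cdot> l"] exI[of _ P2] exI[of _ q1]
        exI[of _ q2] exI[of _ mL])
      (use n_hom u EQL P2 mL(1) mL_eq in simp_all)
qed

end

subsection \<open>The conjugation morphism\<close>

locale conjugation = pointed_protomodular +
  fixes X G T k p1 i c P q1 q2 d e f
  assumes generic: "is_generic_split_ext C X G T k p1 i"
    and product: "is_product C X X P q1 q2"
    and d: "d \<in> hom C X P" "cmp C q1 d = zero C X X" "cmp C q2 d = cid C X"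
    and e: "e \<in> hom C X P" "cmp C q1 e = cid C X" "cmp C q2 e = cid C X"
    and conjugation_mor: "split_ext_mor C P X d q1 e G T k p1 i f c"
begin

lemma generic_split_ext: "split_ext C X G T k p1 i"
  using generic unfolding is_generic_split_ext_def by blast

lemma conjugation_morD: "f \<in> Hom P G" "c \<in> Hom X T" "f \<cdot> d = k" "p1 \<cdot> f = c \<cdot> q1" "f \<cdot> e = i \<cdot> c"
  using conjugation_mor unfolding split_ext_mor_def by auto

lemma diagonal_split_ext: "split_ext C X P X d q1 e"
  using product_split_ext[OF product d e(1,2)] .

lemma generic_mor_unique:
  assumes "split_ext C X A B k' a b"
    and "split_ext_mor C A B k' a b G T k p1 i f1 g1" "split_ext_mor C A B k' a b G T k p1 i f2 g2"
  shows "f1 = f2" "g1 = g2"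
proof -
  obtain f0 g0 where "\<forall>f' g'. split_ext_mor C A B k' a b G T k p1 i f' g' \<longrightarrow> f' = f0 \<and> g' = g0"
    using generic assms(1) unfolding is_generic_split_ext_def by blast
  then show "f1 = f2" "g1 = g2" using assms(2,3) by blast+
qed

lemma conjugation_unique:
  assumes P': "is_product C X X P' s1 s2"
    and d': "d' \<in> Hom X P'" "s1 \<cdot> d' = Z0 X X" "s2 \<cdot> d' = idm X"
    and e': "e' \<in> Hom X P'" "s1 \<cdot> e' = idm X" "s2 \<cdot> e' = idm X"
    and M: "split_ext_mor C P' X d' s1 e' G T k p1 i f' g'"
  shows "g' = c"
proof -
  note p = productD[OF product] and p' = productD[OF P']
  obtain j where j: "j \<in> Hom P P'" "s1 \<cdot> j = q1" "s2 \<cdot> j = q2"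
    using product_lift[OF P'] p by blast
  have j_comp: "s1 \<cdot> (j \<cdot> x) = q1 \<cdot> x" "s2 \<cdot> (j \<cdot> x) = q2 \<cdot> x" if "x \<in> Hom X P" for x
    using comp_eq_whisker[OF j(2), of x] comp_eq_whisker[OF j(3), of x] that j p' by auto
  have "j \<cdot> d = d'" by (rule product_arr_eqI[OF P']) (use j_comp[OF d(1)] j d d' in auto)
  moreover have "j \<cdot> e = e'" by (rule product_arr_eqI[OF P']) (use j_comp[OF e(1)] j e e' in auto)
  ultimately have "split_ext_mor C P X d q1 e P' X d' s1 e' j (idm X)"
    unfolding split_ext_mor_def using j p p' d' e' by simp
  then have "split_ext_mor C P X d q1 e G T k p1 i (f' \<cdot> j) (g' \<cdot> idm X)"
    using split_ext_mor_comp[OF diagonal_split_ext product_split_ext[OF P' d' e'(1,2)]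
        generic_split_ext _ M] by blast
  then have "g' \<cdot> idm X = c"
    using generic_mor_unique(2)[OF diagonal_split_ext _ conjugation_mor] by blast
  moreover have "g' \<in> Hom X T" using M unfolding split_ext_mor_def by blast
  ultimately show ?thesis by simp
qed

lemma conjugation_pullback: "is_pullback C G X T p1 c P f q1"
  by (rule split_ext_mor_pullback[OF diagonal_split_ext generic_split_ext conjugation_mor])

lemma conjugation_comp_pullback:
  assumes t: "t \<in> Hom W X" and PW: "is_product C W X PW r1 r2"
    and d1: "d1 \<in> Hom X PW" "r1 \<cdot> d1 = Z0 X W" "r2 \<cdot> d1 = idm X"
    and s1: "s1 \<in> Hom W PW" "r1 \<cdot> s1 = idm W" "r2 \<cdot> s1 = t"
  obtains h where "h \<in> Hom PW P" "h \<cdot> d1 = d" "h \<cdot> s1 = e \<cdot> t"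
    "is_pullback C G W T p1 (c \<cdot> t) PW (f \<cdot> h) r1"
proof -
  note p = productD[OF product] and r = productD[OF PW]
  have X: "X \<in> Ob" using t by auto
  obtain h where h: "h \<in> Hom PW P" "q1 \<cdot> h = t \<cdot> r1" "q2 \<cdot> h = r2"
    using product_lift[OF product, of "t \<cdot> r1" PW r2] t r by auto
  have h_comp: "q1 \<cdot> (h \<cdot> x) = t \<cdot> (r1 \<cdot> x)" "q2 \<cdot> (h \<cdot> x) = r2 \<cdot> x" if "x \<in> Hom D PW" for x D
    using comp_eq_whisker[OF h(2), of x] comp_eq_whisker[OF h(3), of x] that h t r p by auto
  have hd1: "h \<cdot> d1 = d"
    by (rule product_arr_eqI[OF product]) (use h_comp[OF d1(1)] h d1 d t X in auto)
  have hs1: "h \<cdot> s1 = e \<cdot> t"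
  proof (rule product_arr_eqI[OF product])
    show "q1 \<cdot> (h \<cdot> s1) = q1 \<cdot> (e \<cdot> t)"
      using h_comp(1)[OF s1(1)] s1(2) comp_eq_whisker[OF e(2), of t] t e p by simp
    show "q2 \<cdot> (h \<cdot> s1) = q2 \<cdot> (e \<cdot> t)"
      using h_comp(2)[OF s1(1)] s1(3) comp_eq_whisker[OF e(3), of t] t e p by simp
  qed (use h s1 e t in auto)
  note E1 = product_split_ext[OF PW d1 s1(1,2)]
  have "split_ext_mor C PW W d1 r1 s1 P X d q1 e h t"
    unfolding split_ext_mor_def using h hd1 hs1 t r p s1 d1 by simp
  then have "split_ext_mor C PW W d1 r1 s1 G T k p1 i (f \<cdot> h) (c \<cdot> t)"
    using split_ext_mor_comp[OF E1 diagonal_split_ext generic_split_ext _ conjugation_mor] by blast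
  then show ?thesis using that h(1) hd1 hs1 split_ext_mor_pullback[OF E1 generic_split_ext] by blast
qed

text \<open>Since \<open>c t = 0\<close>, the pair \<open>(k \<pi>\<^sub>2, \<pi>\<^sub>1)\<close> lifts through the pullback of
  conjugation_comp_pullback to an endomorphism \<open>\<theta>\<close> of \<open>W \<times> X\<close>, and \<open>\<pi>\<^sub>2 \<theta>\<close> witnesses that \<open>t\<close>
  commutes with \<open>1\<^sub>X\<close>.\<close>

lemma commutes_with_id_if_conjugation_zero:
  assumes t: "t \<in> Hom W X" "c \<cdot> t = Z0 W T"
  shows "commutes_with_id C X W t"
proof -
  note g = split_extD[OF generic_split_ext] and fc = conjugation_morD
  note kg = kernelD[OF g(5)]
  have W: "W \<in> Ob" and X: "X \<in> Ob" and T: "T \<in> Ob" using t g by auto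
  obtain PW r1 r2 where PW: "is_product C W X PW r1 r2" using product_exists[OF W X] by blast
  note r = productD[OF PW]
  obtain d1 where d1: "d1 \<in> Hom X PW" "r1 \<cdot> d1 = Z0 X W" "r2 \<cdot> d1 = idm X"
    using product_lift[OF PW, of "Z0 X W" X "idm X"] W X by auto
  obtain s1 where s1: "s1 \<in> Hom W PW" "r1 \<cdot> s1 = idm W" "r2 \<cdot> s1 = t"
    using product_lift[OF PW, of "idm W" W t] W t by auto
  obtain h where h: "h \<in> Hom PW P" "h \<cdot> d1 = d" "h \<cdot> s1 = e \<cdot> t"
    and PB: "is_pullback C G W T p1 (c \<cdot> t) PW (f \<cdot> h) r1"
    by (rule conjugation_comp_pullback[OF t(1) PW d1 s1])
  have "p1 \<cdot> (k \<cdot> r2) = (c \<cdot> t) \<cdot> r1"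
    using comp_eq_whisker[OF kg(3), of r2] kg t r T fc by simp
  then obtain th where th: "th \<in> Hom PW PW" "(f \<cdot> h) \<cdot> th = k \<cdot> r2" "r1 \<cdot> th = r1"
    using pullback_lift[OF PB, of "k \<cdot> r2" PW r1] kg r by auto
  have f_th: "f \<cdot> (h \<cdot> (th \<cdot> m)) = k \<cdot> (r2 \<cdot> m)" "r1 \<cdot> (th \<cdot> m) = r1 \<cdot> m"
    if "m \<in> Hom D PW" for m D
    using comp_eq_whisker[OF th(2), of m] comp_eq_whisker[OF th(3), of m] that th h fc r kg by auto
  show ?thesis unfolding commutes_with_id_def
  proof (intro conjI exI allI impI)
    show "t \<in> Hom W X" "is_product C W X PW r1 r2" "r2 \<cdot> th \<in> Hom PW X" using t PW th r by auto
  next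
    fix m assume m: "m \<in> Hom W PW" "r1 \<cdot> m = idm W" "r2 \<cdot> m = Z0 W X"
    have "f \<cdot> (h \<cdot> s1) = Z0 W G" using h(3) comp_eq_whisker[OF fc(5), of t] t e fc g W by simp
    also have "\<dots> = f \<cdot> (h \<cdot> (th \<cdot> m))" using f_th(1)[OF m(1)] m(3) kg W by simp
    finally have "(f \<cdot> h) \<cdot> (th \<cdot> m) = (f \<cdot> h) \<cdot> s1" using h fc th m s1 by simp
    moreover have "r1 \<cdot> (th \<cdot> m) = r1 \<cdot> s1" using f_th(2)[OF m(1)] m(2) s1(2) by simp
    ultimately have "th \<cdot> m = s1" using pullback_arr_eqI[OF PB, of "th \<cdot> m" W s1] th m s1 by simp
    then show "(r2 \<cdot> th) \<cdot> m = t" using m th r s1 by simp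
  next
    fix m assume m: "m \<in> Hom X PW" "r1 \<cdot> m = Z0 X W" "r2 \<cdot> m = idm X"
    have "m = d1" by (rule product_arr_eqI[OF PW]) (use m d1 in auto)
    then have "(f \<cdot> h) \<cdot> (th \<cdot> m) = (f \<cdot> h) \<cdot> m"
      using f_th(1)[OF m(1)] m h fc kg th by simp
    moreover have "r1 \<cdot> (th \<cdot> m) = r1 \<cdot> m" using f_th(2)[OF m(1)] .
    ultimately have "th \<cdot> m = m" using pullback_arr_eqI[OF PB, of "th \<cdot> m" X m] th m by simp
    then show "(r2 \<cdot> th) \<cdot> m = idm X" using m th r by simp
  qed
qed

lemma conjugation_mono:
  assumes "trivial_center C X"
  shows "is_mono C c"
proof (rule mono_if_trivial_kernel[OF conjugation_morD(2)])
  fix W t assume "t \<in> Hom W X" "c \<cdot> t = Z0 W T"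
  then have central: "commutes_with_id C X W t" by (rule commutes_with_id_if_conjugation_zero)
  obtain Z z where Z: "is_center C X Z z" "is_zero_obj C Z"
    using assms unfolding trivial_center_def by blast
  then obtain h where "h \<in> Hom W Z" "z \<cdot> h = t" using central unfolding is_center_def by blast
  moreover have "z \<in> Hom Z X" using Z unfolding is_center_def commutes_with_id_def by blast
  ultimately show "t = Z0 W X" using zero_factors_through_zero_obj[OF Z(2)] by blast
qed

text \<open>The map \<open>q\<close> is the base component of the morphism into the generic split extension from the
  kernel pair of \<open>p1\<close>, split by the diagonal; in the group case it is the action
  \<open>(\<sigma>, x) \<mapsto> \<sigma> \<circ> conj x\<close>.\<close>

lemma action_map_exists: "\<exists>q. q \<in> Hom G T \<and> q \<cdot> i = idm T \<and> q \<cdot> k = c"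
proof -
  note g = split_extD[OF generic_split_ext] and p = productD[OF product] and fc = conjugation_morD
  note kg = kernelD[OF g(5)]
  have X: "X \<in> Ob" and G: "G \<in> Ob" using g by auto
  obtain E ea eb dl kE where EP: "is_pullback C G G T p1 p1 E ea eb"
    and dl: "dl \<in> Hom G E" "ea \<cdot> dl = idm G" "eb \<cdot> dl = idm G"
    and kE: "kE \<in> Hom X E" "ea \<cdot> kE = k" "eb \<cdot> kE = Z0 X G" and SE: "split_ext C X E G kE eb dl"
    by (rule kernel_pair_split_ext[OF generic_split_ext])
  note ee = pullbackD[OF EP]
  have E_comp: "ea \<cdot> (h \<cdot> z) = x \<cdot> z" "eb \<cdot> (h \<cdot> z) = y \<cdot> z"
    if "h \<in> Hom D E" "ea \<cdot> h = x" "eb \<cdot> h = y" "z \<in> Hom D' D" for h x y z D D'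
    using comp_eq_whisker[OF that(2), of z] comp_eq_whisker[OF that(3), of z] that ee by auto
  obtain F q where Fq: "split_ext_mor C E G kE eb dl G T k p1 i F q"
    using generic SE unfolding is_generic_split_ext_def by blast
  have q: "q \<in> Hom G T" using Fq unfolding split_ext_mor_def by blast
  obtain j1 where j1: "j1 \<in> Hom G E" "ea \<cdot> j1 = idm G" "eb \<cdot> j1 = i \<cdot> p1"
    using pullback_lift[OF EP, of "idm G" G "i \<cdot> p1"] comp_eq_whisker[OF g(4), of p1] g G by auto
  have "ea \<cdot> (j1 \<cdot> k) = ea \<cdot> kE" "eb \<cdot> (j1 \<cdot> k) = eb \<cdot> kE"
    using E_comp[OF j1(1-3) g(1)] kE kg g X by simp_all
  then have j1k: "j1 \<cdot> k = kE" using pullback_arr_eqI[OF EP, of "j1 \<cdot> k" X kE] j1 kE g by simp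
  have "ea \<cdot> (j1 \<cdot> i) = ea \<cdot> (dl \<cdot> i)" "eb \<cdot> (j1 \<cdot> i) = eb \<cdot> (dl \<cdot> i)"
    using E_comp[OF j1(1-3) g(3)] E_comp[OF dl g(3)] comp_eq_whisker[OF g(4), of i] g by simp_all
  then have "j1 \<cdot> i = dl \<cdot> i" using pullback_arr_eqI[OF EP, of "j1 \<cdot> i" T "dl \<cdot> i"] j1 dl g by simp
  then have "split_ext_mor C G T k p1 i E G kE eb dl j1 i"
    unfolding split_ext_mor_def using j1 j1k g by simp
  then have "split_ext_mor C G T k p1 i G T k p1 i (F \<cdot> j1) (q \<cdot> i)"
    using split_ext_mor_comp[OF generic_split_ext SE generic_split_ext _ Fq] by blast
  then have qi: "q \<cdot> i = idm T"
    using generic_mor_unique(2)[OF generic_split_ext _ split_ext_mor_id[OF generic_split_ext]]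
    by blast
  obtain j2 where j2: "j2 \<in> Hom P E" "ea \<cdot> j2 = k \<cdot> q2" "eb \<cdot> j2 = k \<cdot> q1"
    using pullback_lift[OF EP, of "k \<cdot> q2" P "k \<cdot> q1"] comp_eq_whisker[OF kg(3)] kg p by auto
  have "ea \<cdot> (j2 \<cdot> d) = ea \<cdot> kE" "eb \<cdot> (j2 \<cdot> d) = eb \<cdot> kE"
    using E_comp[OF j2(1-3) d(1)] comp_eq_whisker[OF d(2), of k] comp_eq_whisker[OF d(3), of k]
      kE kg p d X by simp_all
  then have j2d: "j2 \<cdot> d = kE" using pullback_arr_eqI[OF EP, of "j2 \<cdot> d" X kE] j2 kE d by simp
  have "ea \<cdot> (j2 \<cdot> e) = ea \<cdot> (dl \<cdot> k)" "eb \<cdot> (j2 \<cdot> e) = eb \<cdot> (dl \<cdot> k)"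
    using E_comp[OF j2(1-3) e(1)] E_comp[OF dl kg(1)] comp_eq_whisker[OF e(2), of k]
      comp_eq_whisker[OF e(3), of k] kg p e by simp_all
  then have "j2 \<cdot> e = dl \<cdot> k"
    using pullback_arr_eqI[OF EP, of "j2 \<cdot> e" X "dl \<cdot> k"] j2 dl e kg by simp
  then have "split_ext_mor C P X d q1 e E G kE eb dl j2 k"
    unfolding split_ext_mor_def using j2 j2d kg by simp
  then have "split_ext_mor C P X d q1 e G T k p1 i (F \<cdot> j2) (q \<cdot> k)"
    using split_ext_mor_comp[OF diagonal_split_ext SE generic_split_ext _ Fq] by blast
  then have "q \<cdot> k = c"
    using generic_mor_unique(2)[OF diagonal_split_ext _ conjugation_mor] by blast
  then show ?thesis using q qi by blast
qed

lemma conjugation_bourn_normal: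
  assumes "trivial_center C X"
  shows "bourn_normal_mono C X T c"
proof -
  obtain q where q: "q \<in> Hom G T" "q \<cdot> i = idm T" "q \<cdot> k = c" using action_map_exists by blast
  note c_mono = conjugation_mono[OF assms]
  note g = split_extD[OF generic_split_ext] and p = productD[OF product] and fc = conjugation_morD
  have T: "T \<in> Ob" and X: "X \<in> Ob" using g by auto
  obtain TT y1 y2 where TT: "is_product C T T TT y1 y2" using product_exists[OF T T] by blast
  note y = productD[OF TT]
  obtain rho where rho: "rho \<in> Hom G TT" "y1 \<cdot> rho = p1" "y2 \<cdot> rho = q"
    using product_lift[OF TT g(2) q(1)] by blast
  have "is_mono C rho"
  proof (rule mono_if_trivial_kernel[OF rho(1)])
    fix W t assume t: "t \<in> Hom W G" "rho \<cdot> t = Z0 W TT"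
    have W: "W \<in> Ob" using t by auto
    have "p1 \<cdot> t = Z0 W T" using comp_eq_whisker[OF rho(2), of t] t rho y W by simp
    then obtain h where h: "h \<in> Hom W X" "k \<cdot> h = t" using kernel_lift[OF g(5) t(1)] by blast
    have "c \<cdot> h = q \<cdot> t" using comp_eq_whisker[OF q(3), of h] h g q by simp
    also have "\<dots> = Z0 W T" using comp_eq_whisker[OF rho(3), of t] t rho y W by simp
    also have "\<dots> = c \<cdot> Z0 W X" using fc W by simp
    finally have "h = Z0 W X" using is_monoD[OF c_mono fc(2), of h W "Z0 W X"] h W X by simp
    then show "t = Z0 W G" using h g W by simp
  qed
  then have "jointly_monic C G p1 q" using mono_pair_iff_jointly_monic[OF TT rho] by simp
  then have "is_equiv_rel C T G p1 q"
    using reflexive_relation_is_equiv_rel[OF g(2) q(1) _ g(3,4) q(2)] by blast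
  moreover have "q \<cdot> f = c \<cdot> q2"
  proof (rule split_ext_jointly_epic[OF diagonal_split_ext])
    show "(q \<cdot> f) \<cdot> d = (c \<cdot> q2) \<cdot> d" using fc d q p by simp
    show "(q \<cdot> f) \<cdot> e = (c \<cdot> q2) \<cdot> e" using comp_eq_whisker[OF q(2), of c] fc e q p g by simp
  qed (use q fc p in auto)
  ultimately show ?thesis
    unfolding bourn_normal_mono_def using fc c_mono product conjugation_pullback by blast
qed

text \<open>\<open>ph\<close> classifies the split extension of bourn_normal_split_ext; since \<open>(mt, n)\<close> maps the
  split extension \<open>X \<rightarrow> X \<times> X \<rightleftarrows> X\<close> into it, \<open>ph n = c\<close> by conjugation_unique.\<close>

lemma conjugation_extends_along_bourn_normal:
  assumes "bourn_normal_mono C X Y n"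
  shows "\<exists>ph. ph \<in> Hom Y T \<and> ph \<cdot> n = c"
proof -
  obtain R r1 r2 P' s1 s2 mt where n: "n \<in> Hom X Y" "is_mono C n"
    and R: "is_equiv_rel C Y R r1 r2" and P': "is_product C X X P' s1 s2"
    and mt: "mt \<in> Hom P' R" "r1 \<cdot> mt = n \<cdot> s1" "r2 \<cdot> mt = n \<cdot> s2"
    and pb: "is_pullback C R X Y r1 n P' mt s1"
    by (rule bourn_normal_monoE[OF assms])
  note r = equiv_relD(1,2)[OF R] and p' = productD[OF P']
  have X: "X \<in> Ob" and Y: "Y \<in> Ob" using n by auto
  obtain dl where dl: "dl \<in> Hom Y R" "r1 \<cdot> dl = idm Y" "r2 \<cdot> dl = idm Y"
    using equiv_rel_refl[OF R, of "idm Y" Y] Y by auto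
  obtain d' where d': "d' \<in> Hom X P'" "s1 \<cdot> d' = Z0 X X" "s2 \<cdot> d' = idm X"
    using product_lift[OF P', of "Z0 X X" X "idm X"] X by auto
  obtain e' where e': "e' \<in> Hom X P'" "s1 \<cdot> e' = idm X" "s2 \<cdot> e' = idm X"
    using product_lift[OF P', of "idm X" X "idm X"] X by auto
  note SE = bourn_normal_split_ext[OF R P' n(1) mt(1,2) pb dl(1,2) d']
  have "r1 \<cdot> (mt \<cdot> e') = r1 \<cdot> (dl \<cdot> n)" "r2 \<cdot> (mt \<cdot> e') = r2 \<cdot> (dl \<cdot> n)"
    using comp_eq_whisker[OF mt(2), of e'] comp_eq_whisker[OF mt(3), of e']
      comp_eq_whisker[OF dl(2), of n] comp_eq_whisker[OF dl(3), of n] e' n r mt p' dl by auto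
  then have "mt \<cdot> e' = dl \<cdot> n"
    using equiv_relD(3)[OF R] mt e' dl n unfolding jointly_monic_def by simp
  then have "split_ext_mor C P' X d' s1 e' R Y (mt \<cdot> d') r1 dl mt n"
    unfolding split_ext_mor_def using n mt by simp
  moreover obtain F ph where M: "split_ext_mor C R Y (mt \<cdot> d') r1 dl G T k p1 i F ph"
    using generic SE unfolding is_generic_split_ext_def by blast
  ultimately have "split_ext_mor C P' X d' s1 e' G T k p1 i (F \<cdot> mt) (ph \<cdot> n)"
    using split_ext_mor_comp[OF product_split_ext[OF P' d' e'(1,2)] SE generic_split_ext] by blast
  then have "ph \<cdot> n = c" by (rule conjugation_unique[OF P' d' e'])
  moreover have "ph \<in> Hom Y T" using M unfolding split_ext_mor_def by blast
  ultimately show ?thesis by blast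
qed

lemma characteristic_mono_iff_bourn_normal_comp:
  assumes "trivial_center C X" and u: "u \<in> Hom S X"
  shows "characteristic_mono C S X u \<longleftrightarrow> bourn_normal_mono C S T (c \<cdot> u)"
proof
  assume "characteristic_mono C S X u"
  then show "bourn_normal_mono C S T (c \<cdot> u)"
    using conjugation_bourn_normal[OF assms(1)] unfolding characteristic_mono_def by blast
next
  assume cu: "bourn_normal_mono C S T (c \<cdot> u)"
  show "characteristic_mono C S X u"
    unfolding characteristic_mono_def
  proof (intro conjI allI impI)
    show "u \<in> Hom S X" by (fact u)
    fix Y n assume n: "bourn_normal_mono C X Y n"
    then obtain ph where "ph \<in> Hom Y T" "c = ph \<cdot> n"
      using conjugation_extends_along_bourn_normal by metis
    then show "bourn_normal_mono C S Y (n \<cdot> u)"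
      using bourn_normal_comp_if_image_normal[OF n _ _ conjugation_mono[OF assms(1)] u cu] by blast
  qed
qed

end

theorem theorem5p3:
  fixes C :: "('o, 'm) category"
  assumes "is_category C" and "pointed C" and "has_finite_limits C" and "protomodular C"
    and "X \<in> cobj C"
    and "trivial_center C X"
    and "is_generic_split_ext C X G T k p1 i"
    and "is_conjugation C X G T k p1 i c"
    and "u \<in> hom C S X"
  shows "characteristic_mono C S X u \<longleftrightarrow> bourn_normal_mono C S T (cmp C c u)"
proof -
  interpret pointed_protomodular C using assms(1-4) by unfold_locales
  obtain P q1 q2 d e f where "is_product C X X P q1 q2"
    "d \<in> hom C X P" "cmp C q1 d = zero C X X" "cmp C q2 d = cid C X"
    "e \<in> hom C X P" "cmp C q1 e = cid C X" "cmp C q2 e = cid C X"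
    "split_ext_mor C P X d q1 e G T k p1 i f c"
    using assms(8) unfolding is_conjugation_def by blast
  then interpret conjugation C X G T k p1 i c P q1 q2 d e f
    using assms(7) by unfold_locales
  show ?thesis using characteristic_mono_iff_bourn_normal_comp[OF assms(6,9)] .
qed

end
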